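(* Let $p$ be an odd prime with $3 \mid (p-1)$. Then there exists an MDS $(3p,\,12)_{p}$ symbol-pair code, i.e., a code $\mathcal{C}\subseteq \mathbb{F}_p^{3p}$ with minimum symbol-pair distance $d_p(\mathcal{C})=12$ and $|\mathcal{C}| = p^{3p-12+2}$.
   Context: For a vector $\mathbf{x}=(x_0,\dots,x_{n-1})\in\mathbb{F}_q^n$ (indices taken modulo $n$), the symbol-pair distance between $\mathbf{x},\mathbf{y}\in\mathbb{F}_q^n$ is $d_p(\mathbf{x},\mathbf{y})=|\{i\in\mathbb{Z}_n : (x_i,x_{i+1})\neq(y_i,y_{i+1})\}|$. The minimum symbol-pair distance of a code $\mathcal{C}\subseteq\mathbb{F}_q^n$ is $d_p(\mathcal{C})=\min\{d_p(\mathbf{x},\mathbf{y}) : \mathbf{x},\mathbf{y}\in\mathcal{C},\ \mathbf{x}\neq\mathbf{y}\}$. Any code of length $n$ over $\mathbb{F}_q$ with minimum symbol-pair distance $d_p$ (where $2\le d_p\le n$) satisfies the Singleton-type bound $|\mathcal{C}|\le q^{n-d_p+2}$; a code attaining equality is called an MDS symbol-pair code. An $(n,d_p)_q$ symbol-pair code is a code of length $n$ over $\mathbb{F}_q$ with minimum symbol-pair distance $d_p$. *)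

theory Defs
  imports Main "HOL-Computational_Algebra.Primes"
begin

text \<open>Vectors in F_q^n are lists of length n over {0..<q} (the elements of Z/qZ = F_q for q prime).
Indices are taken modulo n.\<close>

definition vecs :: "nat \<Rightarrow> nat \<Rightarrow> nat list set" where
  "vecs q n = {xs. length xs = n \<and> set xs \<subseteq> {0..<q}}"

definition pair_dist :: "nat list \<Rightarrow> nat list \<Rightarrow> nat" where
  "pair_dist x y = (let n = length x in
     card {i \<in> {0..<n}. (x ! i, x ! ((i + 1) mod n)) \<noteq> (y ! i, y ! ((i + 1) mod n))})"

definition min_pair_dist :: "nat list set \<Rightarrow> nat" where
  "min_pair_dist C = Min {pair_dist x y | x y. x \<in> C \<and> y \<in> C \<and> x \<noteq> y}"

end

theory Submission
  imports Defs "HOL-Number_Theory.Number_Theory"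
begin

text \<open>
  Since \<open>p \<equiv> 1 (mod 3)\<close>, the Chinese remainder theorem identifies the coordinates \<open>\<int>/3p\<close> with
  \<open>\<int>/3 \<times> \<int>/p\<close> so that the successor of \<open>(i, r)\<close> is \<open>(i + 1, r + 1)\<close>; a word becomes three
  functions \<open>a, b, c\<close> on \<open>\<int>/p\<close>. Writing \<open>M\<^sub>j f = \<Sum>\<^sub>r f(r) r\<^sup>j\<close> and \<open>w\<close> for a primitive cube
  root of unity mod \<open>p\<close>, the code is cut out by ten linear conditions: \<open>M\<^sub>0\<close> and \<open>M\<^sub>1\<close> of each
  component vanish, \<open>M\<^sub>2 b = w M\<^sub>2 a\<close>, \<open>M\<^sub>2 c = w M\<^sub>2 b\<close>, and the \<open>M\<^sub>3\<close> and \<open>M\<^sub>4\<close> of the three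
  components sum to zero. Hence it has at least \<open>p\<^bsup>3p - 10\<^esup>\<close> words.

  The pair weight of a word is the sum of the pair weights of \<open>(a, b)\<close>, \<open>(b, c)\<close>, \<open>(c, a)\<close>, where
  the pair weight of \<open>(f, g)\<close> counts the \<open>r\<close> with \<open>f(r) \<noteq> 0\<close> or \<open>g(r + 1) \<noteq> 0\<close>; it bounds the
  supports of \<open>f\<close>, of \<open>g\<close> and of the twist \<open>w f(r) - g(r + 1)\<close>. A nonzero function with \<open>m\<close>
  vanishing moments has more than \<open>m\<close> points in its support (a Vandermonde argument), and the
  conditions give the twists three vanishing moments; this yields weight at least \<open>12\<close> except
  when one twist vanishes and the weights are \<open>3 + 4 + 4\<close>. In that case Lagrange interpolation
  on the four-point supports of the other two twists forces every gap of the three-point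
  support of \<open>b\<close> to sit at prescribed positions, which no three-point set satisfies.
  The Singleton bound for symbol-pair codes then shows that the code has exactly
  \<open>p\<^bsup>3p - 10\<^esup>\<close> words and minimum pair distance \<open>12\<close>.
\<close>

section \<open>Moments modulo a prime\<close>

definition moment :: "nat \<Rightarrow> nat \<Rightarrow> (nat \<Rightarrow> int) \<Rightarrow> int" where
  "moment p j f = (\<Sum>r<p. f r * int r ^ j)"

definition moments_vanish :: "nat \<Rightarrow> nat \<Rightarrow> (nat \<Rightarrow> int) \<Rightarrow> bool" where
  "moments_vanish p m f \<longleftrightarrow> (\<forall>j<m. int p dvd moment p j f)"

definition residue_support :: "nat \<Rightarrow> (nat \<Rightarrow> int) \<Rightarrow> nat set" where
  "residue_support p f = {r. r < p \<and> \<not> int p dvd f r}"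

lemma moments_vanish_Suc:
  "moments_vanish p (Suc m) f \<longleftrightarrow> moments_vanish p m f \<and> int p dvd moment p m f"
  by (auto simp: moments_vanish_def less_Suc_eq)

lemma residue_support_subset: "residue_support p f \<subseteq> {..<p}"
  by (auto simp: residue_support_def)

lemma finite_residue_support [simp]: "finite (residue_support p f)"
  using finite_subset[OF residue_support_subset] by blast

lemma moment_diff: "moment p j (\<lambda>r. f r - g r) = moment p j f - moment p j g"
  by (simp add: moment_def sum_subtractf left_diff_distrib)

lemma moment_dvd_of_pointwise:
  assumes "\<And>r. r < p \<Longrightarrow> int p dvd f r"
  shows "int p dvd moment p j f"
  unfolding moment_def using assms by (intro dvd_sum dvd_mult2) simp

lemma moment_cong:
  assumes "\<And>r. r < p \<Longrightarrow> int p dvd f r - g r"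
  shows "int p dvd moment p j f - moment p j g"
  unfolding moment_diff[symmetric] using assms by (rule moment_dvd_of_pointwise)

lemma dvd_diff_less_imp_eq:
  assumes "int p dvd int s - int t" "s < p" "t < p"
  shows "s = t"
proof (rule ccontr)
  assume "s \<noteq> t"
  then have "int s - int t \<noteq> 0" by simp
  from dvd_imp_le_int[OF this assms(1)] assms(2,3) show False by linarith
qed

lemma not_dvd_node_product:
  assumes "prime p" "t < p" "finite L" "L \<subseteq> {..<p}" "t \<notin> L"
  shows "\<not> int p dvd (\<Prod>c\<in>L. int t - int c)"
proof
  have "prime (int p)" using assms(1) by (simp only: prime_nat_int_transfer)
  moreover assume "int p dvd (\<Prod>c\<in>L. int t - int c)"
  ultimately obtain c where "c \<in> L" "int p dvd int t - int c"
    using prime_dvd_prod_iff[OF assms(3)] by meson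
  with assms(2,4,5) dvd_diff_less_imp_eq show False by blast
qed

lemma sum_node_product_single:
  assumes "t < p" "finite L" "\<And>r. r < p \<Longrightarrow> r \<noteq> t \<Longrightarrow> r \<notin> L \<Longrightarrow> int p dvd f r"
  shows "int p dvd (\<Sum>r<p. f r * (\<Prod>c\<in>L. int r - int c)) - f t * (\<Prod>c\<in>L. int t - int c)"
proof -
  have "(\<Sum>r<p. f r * (\<Prod>c\<in>L. int r - int c)) - f t * (\<Prod>c\<in>L. int t - int c) =
      (\<Sum>r\<in>{..<p} - {t}. f r * (\<Prod>c\<in>L. int r - int c))"
    using assms(1) by (simp add: sum.remove)
  also have "int p dvd \<dots>"
  proof (rule dvd_sum)
    fix r assume "r \<in> {..<p} - {t}"
    then have "int p dvd f r \<or> (\<Prod>c\<in>L. int r - int c) = 0"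
      using assms(2,3) by auto
    then show "int p dvd f r * (\<Prod>c\<in>L. int r - int c)" by auto
  qed
  finally show ?thesis .
qed

text \<open>The weight \<open>r\<^sup>j \<Prod>\<^sub>c\<^sub>\<in>\<^sub>L (r - c)\<close> is a monic polynomial of degree \<open>j + |L|\<close> whose next
  coefficient is \<open>-\<Sum>L\<close>; against \<open>f\<close> only its coefficients of degree \<open>m\<close> and \<open>m + 1\<close> survive.\<close>

lemma moment_node_product:
  assumes "finite L" "moments_vanish p m f" "j + card L \<le> Suc m"
  shows "int p dvd (\<Sum>r<p. f r * int r ^ j * (\<Prod>c\<in>L. int r - int c)) -
     (if j + card L < m then 0 else if j + card L = m then moment p m f
      else moment p (Suc m) f - (\<Sum>c\<in>L. int c) * moment p m f)"
  using assms(1,3)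
proof (induction L arbitrary: j rule: finite_induct)
  case empty
  then consider "j < m" | "j = m" | "j = Suc m" by linarith
  then show ?case using assms(2) by cases (auto simp: moments_vanish_def moment_def)
next
  case (insert c L)
  define S where "S i = (\<Sum>r<p. f r * int r ^ i * (\<Prod>c\<in>L. int r - int c))" for i
  define R where "R k = (if k < m then 0 else if k = m then moment p m f
      else moment p (Suc m) f - (\<Sum>c\<in>L. int c) * moment p m f)" for k
  have card: "card (insert c L) = Suc (card L)" using insert.hyps by simp
  have "(\<Sum>r<p. f r * int r ^ j * (\<Prod>c\<in>insert c L. int r - int c)) = S (Suc j) - int c * S j"
    using insert.hyps by (simp add: S_def sum_distrib_left sum_subtractf[symmetric] algebra_simps)
  moreover have "(if j + card (insert c L) < m then 0 else if j + card (insert c L) = m then moment p m f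
      else moment p (Suc m) f - (\<Sum>c\<in>insert c L. int c) * moment p m f) =
      R (Suc j + card L) - int c * R (j + card L)"
  proof -
    consider "Suc (j + card L) < m" | "Suc (j + card L) = m" | "j + card L = m"
      using insert.prems card by linarith
    then show ?thesis using insert.hyps by cases (simp_all add: R_def card algebra_simps)
  qed
  moreover have "int p dvd S (Suc j) - R (Suc j + card L)"
    unfolding S_def R_def by (rule insert.IH) (use insert.prems card in simp)
  moreover have "int p dvd S j - R (j + card L)"
    unfolding S_def R_def by (rule insert.IH) (use insert.prems card in simp)
  moreover have "S (Suc j) - int c * S j - (R (Suc j + card L) - int c * R (j + card L)) =
      (S (Suc j) - R (Suc j + card L)) - int c * (S j - R (j + card L))"
    by (simp add: algebra_simps)
  ultimately show ?case by (simp only: dvd_diff dvd_mult)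
qed

lemma card_residue_support_gt:
  assumes "prime p" "moments_vanish p m f" "residue_support p f \<noteq> {}"
  shows "m < card (residue_support p f)"
proof (rule ccontr)
  assume small: "\<not> m < card (residue_support p f)"
  obtain t where t: "t \<in> residue_support p f" using assms(3) by (meson ex_in_conv)
  define L where "L = residue_support p f - {t}"
  have "0 < card (residue_support p f)" using t by (auto simp: card_gt_0_iff)
  then have L: "finite L" "L \<subseteq> {..<p}" "t \<notin> L" "card L < m"
    using t small residue_support_subset[of p f] by (auto simp: L_def card_Diff_singleton)
  have t_lt: "t < p" and ft: "\<not> int p dvd f t" using t by (auto simp: residue_support_def)
  have "int p dvd (\<Sum>r<p. f r * (\<Prod>c\<in>L. int r - int c))"
    using moment_node_product[OF L(1) assms(2), of 0] L(4) by simp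
  moreover have "int p dvd (\<Sum>r<p. f r * (\<Prod>c\<in>L. int r - int c)) - f t * (\<Prod>c\<in>L. int t - int c)"
    by (rule sum_node_product_single[OF t_lt L(1)]) (auto simp: L_def residue_support_def)
  ultimately have "int p dvd f t * (\<Prod>c\<in>L. int t - int c)"
    by (simp add: dvd_diff_right_iff)
  moreover have "prime (int p)" using assms(1) by (simp only: prime_nat_int_transfer)
  ultimately show False
    using ft not_dvd_node_product[OF assms(1) t_lt L(1-3)] prime_dvd_mult_iff by blast
qed

lemma lagrange_moment:
  assumes "moments_vanish p m f" "finite K" "card K = Suc m" "t \<in> K" "t < p"
    and "\<And>r. r < p \<Longrightarrow> r \<notin> K \<Longrightarrow> int p dvd f r"
  shows "int p dvd f t * (\<Prod>c\<in>K - {t}. int t - int c) - moment p m f"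
proof -
  have L: "finite (K - {t})" "card (K - {t}) = m" using assms(2-4) by auto
  define S where "S = (\<Sum>r<p. f r * (\<Prod>c\<in>K - {t}. int r - int c))"
  have "int p dvd S - moment p m f"
    using moment_node_product[OF L(1) assms(1), of 0] L(2) by (simp add: S_def)
  moreover have "int p dvd S - f t * (\<Prod>c\<in>K - {t}. int t - int c)"
    unfolding S_def using assms(6) by (intro sum_node_product_single[OF assms(5) L(1)]) auto
  moreover have "f t * (\<Prod>c\<in>K - {t}. int t - int c) - moment p m f =
      (S - moment p m f) - (S - f t * (\<Prod>c\<in>K - {t}. int t - int c))"
    by simp
  ultimately show ?thesis by (simp only: dvd_diff)
qed

lemma moment_Suc_support_sum:
  assumes "moments_vanish p m f" "finite K" "card K = Suc m"
    and "\<And>r. r < p \<Longrightarrow> r \<notin> K \<Longrightarrow> int p dvd f r"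
  shows "int p dvd moment p (Suc m) f - (\<Sum>c\<in>K. int c) * moment p m f"
proof -
  have "int p dvd (\<Sum>r<p. f r * (\<Prod>c\<in>K. int r - int c))"
  proof (rule dvd_sum)
    fix r assume "r \<in> {..<p}"
    then have "int p dvd f r \<or> (\<Prod>c\<in>K. int r - int c) = 0" using assms(2,4) by auto
    then show "int p dvd f r * (\<Prod>c\<in>K. int r - int c)" by auto
  qed
  moreover have "int p dvd (\<Sum>r<p. f r * (\<Prod>c\<in>K. int r - int c)) -
      (moment p (Suc m) f - (\<Sum>c\<in>K. int c) * moment p m f)"
    using moment_node_product[OF assms(2,1), of 0] assms(3) by simp
  ultimately show ?thesis by (simp add: dvd_diff_right_iff)
qed

lemma mod_add_mod_add:
  fixes x a b c k p :: nat
  assumes "a + b = c + k * p"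
  shows "((x + a) mod p + b) mod p = (x + c) mod p"
proof -
  have "((x + a) mod p + b) mod p = (x + a + b) mod p" by (simp add: mod_add_left_eq)
  also have "x + a + b = x + c + k * p" using assms by simp
  finally show ?thesis by simp
qed

definition cyclic_shift :: "nat \<Rightarrow> nat \<Rightarrow> (nat \<Rightarrow> int) \<Rightarrow> nat \<Rightarrow> int" where
  "cyclic_shift p k f r = f ((r + k) mod p)"

lemma moment_cyclic_shift:
  assumes "k \<le> p" "int p dvd \<kappa> + int k"
  shows "int p dvd moment p j (cyclic_shift p k f) -
    (\<Sum>i\<le>j. of_nat (j choose i) * \<kappa> ^ (j - i) * moment p i f)"
proof -
  have left_inv: "((r + k) mod p + (p - k)) mod p = r" if "r < p" for r
    using mod_add_mod_add[of k "p - k" 0 1 p r] assms(1) that by simp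
  have right_inv: "((s + (p - k)) mod p + k) mod p = s" if "s < p" for s
    using mod_add_mod_add[of "p - k" k 0 1 p s] assms(1) that by simp
  have reindex: "moment p j (cyclic_shift p k f) = (\<Sum>s<p. f s * int ((s + (p - k)) mod p) ^ j)"
    unfolding moment_def cyclic_shift_def
    by (rule sum.reindex_bij_witness[where i = "\<lambda>s. (s + (p - k)) mod p" and j = "\<lambda>r. (r + k) mod p"])
      (use assms(1) left_inv right_inv in auto)
  have "[int ((s + (p - k)) mod p) = int s + \<kappa>] (mod int p)" for s
  proof -
    have "[int ((s + (p - k)) mod p) = int s + int (p - k)] (mod int p)"
      by (simp add: cong_def zmod_int)
    moreover have "int (p - k) - \<kappa> = int p - (\<kappa> + int k)" using assms(1) by simp
    then have "[int s + int (p - k) = int s + \<kappa>] (mod int p)"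
      using dvd_diff[OF dvd_refl assms(2)] by (simp add: cong_iff_dvd_diff algebra_simps)
    ultimately show ?thesis by (rule cong_trans)
  qed
  then have shift: "[(\<Sum>s<p. f s * int ((s + (p - k)) mod p) ^ j) = (\<Sum>s<p. f s * (int s + \<kappa>) ^ j)] (mod int p)"
    by (intro cong_sum cong_mult cong_refl cong_pow)
  have binomial: "(\<Sum>s<p. f s * (int s + \<kappa>) ^ j) =
      (\<Sum>s<p. \<Sum>i\<le>j. of_nat (j choose i) * \<kappa> ^ (j - i) * (f s * int s ^ i))"
    unfolding binomial_ring by (simp add: sum_distrib_left mult_ac)
  also have "\<dots> = (\<Sum>i\<le>j. of_nat (j choose i) * \<kappa> ^ (j - i) * moment p i f)"
    by (subst sum.swap) (simp add: moment_def sum_distrib_left)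
  finally show ?thesis using shift unfolding reindex cong_iff_dvd_diff by simp
qed

lemma moment_cyclic_shift_vanishing:
  assumes "k \<le> p" "int p dvd \<kappa> + int k" "moments_vanish p m f"
  shows "int p dvd moment p j (cyclic_shift p k f) -
    (\<Sum>i\<in>{m..j}. of_nat (j choose i) * \<kappa> ^ (j - i) * moment p i f)"
proof -
  define T where "T i = of_nat (j choose i) * \<kappa> ^ (j - i) * moment p i f" for i
  have "sum T {..j} = sum T ({..j} - {m..j}) + sum T {m..j}"
    by (rule sum.subset_diff) auto
  moreover have "int p dvd sum T ({..j} - {m..j})"
    using assms(3) by (intro dvd_sum) (auto simp: T_def moments_vanish_def)
  moreover have "int p dvd moment p j (cyclic_shift p k f) - sum T {..j}"
    using moment_cyclic_shift[OF assms(1,2)] by (simp add: T_def)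
  moreover have "moment p j (cyclic_shift p k f) - sum T {m..j} =
      (moment p j (cyclic_shift p k f) - sum T {..j}) + sum T ({..j} - {m..j})"
    by (simp add: calculation(1))
  ultimately show ?thesis by (simp only: T_def[symmetric] dvd_add)
qed

lemma moments_vanish_cyclic_shift:
  assumes "k \<le> p" "int p dvd \<kappa> + int k" "moments_vanish p m f"
  shows "moments_vanish p m (cyclic_shift p k f)"
  unfolding moments_vanish_def
proof (intro allI impI)
  fix j assume "j < m"
  then show "int p dvd moment p j (cyclic_shift p k f)"
    using moment_cyclic_shift_vanishing[OF assms, of j] by simp
qed

lemma int_mod_add_cong: "int p dvd int ((x + k) mod p) - (int x + int k)"
proof -
  have "int ((x + k) mod p) = (int x + int k) mod int p" by (simp add: zmod_int)
  then show ?thesis by (simp add: mod_eq_dvd_iff[symmetric] mod_diff_left_eq)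
qed

section \<open>Symbol-pair codes\<close>

lemma card_vecs: "card (vecs q n) = q ^ n"
  using card_lists_length_eq[of "{0..<q}" n] by (simp add: vecs_def conj_commute)

lemma finite_vecs: "finite (vecs q n)"
  using finite_lists_length_eq[of "{0..<q}" n] by (simp add: vecs_def conj_commute)

lemma vecs_nth_less: "x \<in> vecs q n \<Longrightarrow> i < n \<Longrightarrow> x ! i < q"
  unfolding vecs_def using nth_mem by fastforce

lemma drop_in_vecs: "x \<in> vecs q n \<Longrightarrow> drop k x \<in> vecs q (n - k)"
  unfolding vecs_def using set_drop_subset by fastforce

lemma pair_dist_le_of_drop_eq:
  assumes len: "length x = n" "length y = n" and drop: "drop k x = drop k y" and "k < n"
  shows "pair_dist x y \<le> k + 1"
proof -
  have eq: "x ! i = y ! i" if "k \<le> i" "i < n" for i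
  proof -
    have "x ! i = drop k x ! (i - k)" using that len by simp
    also have "\<dots> = y ! i" using that len by (simp add: drop)
    finally show ?thesis .
  qed
  have "{i \<in> {0..<n}. (x ! i, x ! ((i + 1) mod n)) \<noteq> (y ! i, y ! ((i + 1) mod n))} \<subseteq> {..<k} \<union> {n - 1}"
  proof
    fix i assume i: "i \<in> {i \<in> {0..<n}. (x ! i, x ! ((i + 1) mod n)) \<noteq> (y ! i, y ! ((i + 1) mod n))}"
    show "i \<in> {..<k} \<union> {n - 1}"
    proof (cases "i + 1 < n")
      case True
      then show ?thesis using i eq[of i] eq[of "i + 1"] by (auto simp: not_le)
    next
      case False
      moreover have "i < n" using i by simp
      ultimately have "i = n - 1" by linarith
      then show ?thesis by simp
    qed
  qed
  then have "card {i \<in> {0..<n}. (x ! i, x ! ((i + 1) mod n)) \<noteq> (y ! i, y ! ((i + 1) mod n))} \<le> card ({..<k} \<union> {n - 1})"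
    by (intro card_mono) auto
  also have "\<dots> \<le> k + 1" using card_Un_le[of "{..<k}" "{n - 1}"] by simp
  finally show ?thesis by (simp add: pair_dist_def len)
qed

lemma card_le_pair_singleton:
  assumes C: "C \<subseteq> vecs q n" and d: "2 \<le> d" "d \<le> n"
    and dist: "\<And>x y. x \<in> C \<Longrightarrow> y \<in> C \<Longrightarrow> x \<noteq> y \<Longrightarrow> d \<le> pair_dist x y"
  shows "card C \<le> q ^ (n - d + 2)"
proof -
  have "inj_on (drop (d - 2)) C"
  proof (rule inj_onI, rule ccontr)
    fix x y assume "x \<in> C" "y \<in> C" "drop (d - 2) x = drop (d - 2) y" "x \<noteq> y"
    moreover have "length x = n" "length y = n" using C \<open>x \<in> C\<close> \<open>y \<in> C\<close> by (auto simp: vecs_def)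
    ultimately have "d \<le> pair_dist x y" "pair_dist x y \<le> d - 2 + 1"
      using dist pair_dist_le_of_drop_eq[of x n y "d - 2"] d by auto
    with d show False by linarith
  qed
  then have "card C = card (drop (d - 2) ` C)" by (rule card_image[symmetric])
  also have "\<dots> \<le> card (vecs q (n - (d - 2)))"
    using C drop_in_vecs by (intro card_mono finite_vecs) blast
  also have "n - (d - 2) = n - d + 2" using d by simp
  finally show ?thesis by (simp add: card_vecs)
qed

lemma min_pair_dist_of_mds:
  assumes C: "C \<subseteq> vecs q n" and q: "2 \<le> q" and d: "2 \<le> d" "d < n"
    and card: "card C = q ^ (n - d + 2)"
    and dist: "\<And>x y. x \<in> C \<Longrightarrow> y \<in> C \<Longrightarrow> x \<noteq> y \<Longrightarrow> d \<le> pair_dist x y"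
  shows "min_pair_dist C = d"
proof -
  define D where "D = {pair_dist x y | x y. x \<in> C \<and> y \<in> C \<and> x \<noteq> y}"
  have "\<exists>x\<in>C. \<exists>y\<in>C. x \<noteq> y \<and> pair_dist x y < Suc d"
  proof (rule ccontr)
    assume "\<not> ?thesis"
    then have "card C \<le> q ^ (n - Suc d + 2)"
      using card_le_pair_singleton[OF C, of "Suc d"] d by fastforce
    moreover have "q ^ (n - Suc d + 2) < q ^ (n - d + 2)"
      using q d by (intro power_strict_increasing) auto
    ultimately show False using card by simp
  qed
  then have "d \<in> D" using dist by (force simp: D_def)
  moreover have "finite D"
  proof -
    have "D \<subseteq> (\<lambda>(x, y). pair_dist x y) ` (C \<times> C)" by (auto simp: D_def)
    then show ?thesis using finite_subset[OF C finite_vecs] finite_subset by blast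
  qed
  ultimately have "Min D = d" using dist by (intro Min_eqI) (auto simp: D_def)
  then show ?thesis by (simp add: min_pair_dist_def D_def)
qed

definition vec_diff :: "nat \<Rightarrow> nat list \<Rightarrow> nat list \<Rightarrow> nat list" where
  "vec_diff q x y = map2 (\<lambda>a b. (a + q - b) mod q) x y"

lemma vec_diff_in_vecs:
  "0 < q \<Longrightarrow> x \<in> vecs q n \<Longrightarrow> y \<in> vecs q n \<Longrightarrow> vec_diff q x y \<in> vecs q n"
  by (auto simp: vecs_def vec_diff_def set_zip)

lemma vec_diff_nth_cong:
  assumes "x \<in> vecs q n" "y \<in> vecs q n" "i < n"
  shows "int q dvd int (vec_diff q x y ! i) - (int (x ! i) - int (y ! i))"
proof -
  have "y ! i < q" "length x = n" "length y = n"
    using assms vecs_nth_less by (auto simp: vecs_def)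
  then have "int (vec_diff q x y ! i) - (int (x ! i) - int (y ! i)) =
      - ((int (x ! i) + int q - int (y ! i)) - (int (x ! i) + int q - int (y ! i)) mod int q) + int q"
    using assms(3) by (simp add: vec_diff_def zmod_int of_nat_diff)
  also have "int q dvd \<dots>" by (simp only: dvd_add dvd_minus_iff dvd_minus_mod dvd_refl)
  finally show ?thesis .
qed

lemma vec_diff_inj:
  assumes "x \<in> vecs q n" "y \<in> vecs q n" "z \<in> vecs q n" "vec_diff q x z = vec_diff q y z"
  shows "x = y"
proof (rule nth_equalityI)
  show "length x = length y" using assms by (simp add: vecs_def)
  fix i assume "i < length x"
  then have i: "i < n" using assms by (simp add: vecs_def)
  have lt: "x ! i < q" "y ! i < q" using assms i vecs_nth_less by auto
  have "int (x ! i) - int (y ! i) =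
      (int (vec_diff q y z ! i) - (int (y ! i) - int (z ! i)))
      - (int (vec_diff q x z ! i) - (int (x ! i) - int (z ! i)))"
    using assms(4) by simp
  also have "int q dvd \<dots>"
    using vec_diff_nth_cong[OF assms(1,3) i] vec_diff_nth_cong[OF assms(2,3) i] by (simp only: dvd_diff)
  finally show "x ! i = y ! i" using dvd_diff_less_imp_eq lt by blast
qed

definition additive_mod :: "nat \<Rightarrow> nat \<Rightarrow> (nat list \<Rightarrow> int) \<Rightarrow> bool" where
  "additive_mod q n \<phi> \<longleftrightarrow>
    (\<forall>x\<in>vecs q n. \<forall>y\<in>vecs q n. int q dvd \<phi> (vec_diff q x y) - (\<phi> x - \<phi> y))"

text \<open>Each additive condition cuts a subgroup down by at most a factor \<open>q\<close>: translating by a member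
  of a residue class maps it injectively into the class of \<open>0\<close>.\<close>

lemma card_le_card_zeros:
  assumes q: "0 < q" and K: "K \<subseteq> vecs q n" "\<And>x y. x \<in> K \<Longrightarrow> y \<in> K \<Longrightarrow> vec_diff q x y \<in> K"
    and \<phi>: "additive_mod q n \<phi>"
  shows "card K \<le> q * card {x \<in> K. int q dvd \<phi> x}"
proof -
  define Z where "Z = {x \<in> K. int q dvd \<phi> x}"
  define F where "F v = {x \<in> K. \<phi> x mod int q = int v}" for v
  have fin: "finite K" using K(1) finite_vecs finite_subset by blast
  have cover: "K \<subseteq> (\<Union>v<q. F v)"
  proof
    fix x assume "x \<in> K"
    define v where "v = nat (\<phi> x mod int q)"
    have "int v = \<phi> x mod int q" "v < q" using q by (simp_all add: v_def nat_less_iff)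
    with \<open>x \<in> K\<close> have "x \<in> F v" "v \<in> {..<q}" by (simp_all add: F_def)
    then show "x \<in> (\<Union>v<q. F v)" by blast
  qed
  have card_class: "card (F v) \<le> card Z" for v
  proof (cases "F v = {}")
    case False
    then obtain x0 where x0: "x0 \<in> F v" by blast
    have "(\<lambda>x. vec_diff q x x0) ` F v \<subseteq> Z"
    proof clarify
      fix x assume x: "x \<in> F v"
      have in_K: "x \<in> K" "x0 \<in> K" using x x0 by (simp_all add: F_def)
      then have "x \<in> vecs q n" "x0 \<in> vecs q n" using K(1) by auto
      then have "int q dvd \<phi> (vec_diff q x x0) - (\<phi> x - \<phi> x0)"
        using \<phi> by (simp add: additive_mod_def)
      moreover have "int q dvd \<phi> x - \<phi> x0"
        using x x0 by (simp add: F_def mod_eq_dvd_iff[symmetric])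
      ultimately have "int q dvd \<phi> (vec_diff q x x0)" using dvd_diff_left_iff by blast
      then show "vec_diff q x x0 \<in> Z" using K(2)[OF in_K] by (simp add: Z_def)
    qed
    moreover have "inj_on (\<lambda>x. vec_diff q x x0) (F v)"
    proof (rule inj_onI)
      fix x y assume "x \<in> F v" "y \<in> F v" "vec_diff q x x0 = vec_diff q y x0"
      moreover have "F v \<subseteq> vecs q n" using K(1) by (auto simp: F_def)
      ultimately show "x = y" using vec_diff_inj[of x q n y x0] x0 by blast
    qed
    ultimately show ?thesis
      by (intro card_inj_on_le) (auto simp: Z_def fin)
  qed simp
  have "card K \<le> card (\<Union>v<q. F v)" by (rule card_mono[OF _ cover]) (auto simp: F_def fin)
  also have "\<dots> \<le> (\<Sum>v<q. card (F v))" by (rule card_UN_le) simp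
  also have "\<dots> \<le> q * card Z" using sum_mono[of "{..<q}", OF card_class] by simp
  finally show ?thesis by (simp add: Z_def)
qed

lemma card_common_zeros_ge:
  assumes q: "0 < q" and \<Phi>: "\<forall>\<phi>\<in>set \<Phi>. additive_mod q n \<phi>"
  shows "q ^ n \<le> card {x \<in> vecs q n. \<forall>\<phi>\<in>set \<Phi>. int q dvd \<phi> x} * q ^ length \<Phi>"
  using \<Phi>
proof (induction \<Phi>)
  case Nil
  then show ?case by (simp add: card_vecs)
next
  case (Cons \<phi> \<Phi>)
  define K where "K = {x \<in> vecs q n. \<forall>\<psi>\<in>set \<Phi>. int q dvd \<psi> x}"
  have closed: "vec_diff q x y \<in> K" if "x \<in> K" "y \<in> K" for x y
  proof -
    have "int q dvd \<psi> (vec_diff q x y)" if "\<psi> \<in> set \<Phi>" for \<psi>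
    proof -
      have "x \<in> vecs q n" "y \<in> vecs q n" "int q dvd \<psi> x" "int q dvd \<psi> y"
        using \<open>x \<in> K\<close> \<open>y \<in> K\<close> that by (simp_all add: K_def)
      moreover have "additive_mod q n \<psi>" using Cons.prems that by simp
      ultimately have "int q dvd \<psi> (vec_diff q x y) - (\<psi> x - \<psi> y)" "int q dvd \<psi> x - \<psi> y"
        by (simp_all add: additive_mod_def)
      then show ?thesis using dvd_diff_left_iff by blast
    qed
    then show ?thesis using that q by (auto simp: K_def intro: vec_diff_in_vecs)
  qed
  have "{x \<in> K. int q dvd \<phi> x} = {x \<in> vecs q n. \<forall>\<psi>\<in>set (\<phi> # \<Phi>). int q dvd \<psi> x}"
    by (auto simp: K_def)
  moreover have "card K \<le> q * card {x \<in> K. int q dvd \<phi> x}"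
    using Cons.prems by (intro card_le_card_zeros[OF q _ closed]) (auto simp: K_def)
  ultimately have step: "card K \<le> q * card {x \<in> vecs q n. \<forall>\<psi>\<in>set (\<phi> # \<Phi>). int q dvd \<psi> x}"
    by simp
  have "q ^ n \<le> card K * q ^ length \<Phi>"
    using Cons by (simp add: K_def)
  also have "\<dots> \<le> q * card {x \<in> vecs q n. \<forall>\<psi>\<in>set (\<phi> # \<Phi>). int q dvd \<psi> x} * q ^ length \<Phi>"
    using step by (rule mult_right_mono) simp
  finally show ?case by (simp add: ac_simps)
qed

section \<open>Pair weights of three components\<close>

lemma obtain_insert_of_card_Suc:
  assumes "finite S" "U \<subseteq> S" "card S = Suc (card U)"
  obtains t where "t \<notin> U" "S = insert t U"
proof -
  have "card (S - U) = 1"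
    using assms by (simp add: card_Diff_subset finite_subset)
  then obtain t where "S - U = {t}" by (auto simp: card_Suc_eq)
  with assms(2) that show ?thesis by blast
qed

locale primitive_cube_root =
  fixes p :: nat and w :: int
  assumes prime: "prime p" and p_ge_7: "7 \<le> p" and root: "int p dvd w\<^sup>2 + w + 1"
begin

abbreviation p_dvd :: "int \<Rightarrow> bool" where
  "p_dvd x \<equiv> int p dvd x"

abbreviation mom :: "nat \<Rightarrow> (nat \<Rightarrow> int) \<Rightarrow> int" where
  "mom j f \<equiv> moment p j f"

lemma prime_int: "prime (int p)"
  using prime by (simp only: prime_nat_int_transfer)

lemma p_dvd_mult_iff: "p_dvd (x * y) \<longleftrightarrow> p_dvd x \<or> p_dvd y"
  using prime_int by (rule prime_dvd_mult_iff)

lemma not_p_dvd_small: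
  assumes "0 < \<bar>k\<bar>" "\<bar>k\<bar> < 7"
  shows "\<not> p_dvd k"
proof
  assume "p_dvd k"
  then have "\<bar>int p\<bar> \<le> \<bar>k\<bar>" using assms(1) by (intro dvd_imp_le_int) auto
  with assms(2) p_ge_7 show False by simp
qed

lemma not_p_dvd_nine: "\<not> p_dvd 9"
  using p_dvd_mult_iff[of 3 3] not_p_dvd_small[of 3] by simp

lemma root_cube: "p_dvd (w ^ 3 - 1)"
proof -
  have "w ^ 3 - 1 = (w - 1) * (w\<^sup>2 + w + 1)"
    by (simp add: algebra_simps power2_eq_square power3_eq_cube)
  then show ?thesis using root by simp
qed

lemma not_p_dvd_factor:
  assumes "w\<^sup>2 + w + 1 = d * e + k" "\<not> p_dvd k"
  shows "\<not> p_dvd d"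
proof
  assume "p_dvd d"
  then have "p_dvd (w\<^sup>2 + w + 1 - d * e)" using root by simp
  with assms show False by simp
qed

lemma root_not_dvd:
  shows "\<not> p_dvd w" and "\<not> p_dvd (w - 1)" and "\<not> p_dvd (w + 1)" and "\<not> p_dvd (w + 2)"
proof -
  have small: "\<not> p_dvd 1" "\<not> p_dvd 3" using not_p_dvd_small[of 1] not_p_dvd_small[of 3] by simp_all
  show "\<not> p_dvd w"
    by (rule not_p_dvd_factor[of w "w + 1" 1]) (use p_ge_7 in \<open>simp_all add: small algebra_simps power2_eq_square\<close>)
  show "\<not> p_dvd (w - 1)"
    by (rule not_p_dvd_factor[of _ "w + 2" 3]) (use p_ge_7 in \<open>simp_all add: small algebra_simps power2_eq_square\<close>)
  show "\<not> p_dvd (w + 1)"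
    by (rule not_p_dvd_factor[of _ w 1]) (use p_ge_7 in \<open>simp_all add: small algebra_simps power2_eq_square\<close>)
  show "\<not> p_dvd (w + 2)"
    by (rule not_p_dvd_factor[of _ "w - 1" 3]) (use p_ge_7 in \<open>simp_all add: small algebra_simps power2_eq_square\<close>)
qed

definition twist :: "(nat \<Rightarrow> int) \<Rightarrow> (nat \<Rightarrow> int) \<Rightarrow> nat \<Rightarrow> int" where
  "twist a b r = w * a r - b ((r + 1) mod p)"

definition twist_vanishes :: "(nat \<Rightarrow> int) \<Rightarrow> (nat \<Rightarrow> int) \<Rightarrow> bool" where
  "twist_vanishes a b \<longleftrightarrow> (\<forall>r<p. p_dvd (twist a b r))"

definition pair_support :: "(nat \<Rightarrow> int) \<Rightarrow> (nat \<Rightarrow> int) \<Rightarrow> nat set" where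
  "pair_support f g = {r. r < p \<and> (\<not> p_dvd (f r) \<or> \<not> p_dvd (g ((r + 1) mod p)))}"

abbreviation pair_weight :: "(nat \<Rightarrow> int) \<Rightarrow> (nat \<Rightarrow> int) \<Rightarrow> nat" where
  "pair_weight f g \<equiv> card (pair_support f g)"

text \<open>The third \<open>M\<^sub>2\<close> relation follows from the other two as \<open>w\<^sup>3 \<equiv> 1\<close>; it is included to make
  the conditions invariant under rotating \<open>(a, b, c)\<close>.\<close>

definition parity_checks :: "(nat \<Rightarrow> int) \<Rightarrow> (nat \<Rightarrow> int) \<Rightarrow> (nat \<Rightarrow> int) \<Rightarrow> bool" where
  "parity_checks a b c \<longleftrightarrow> moments_vanish p 2 a \<and> moments_vanish p 2 b \<and> moments_vanish p 2 c \<and>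
     p_dvd (mom 2 b - w * mom 2 a) \<and> p_dvd (mom 2 c - w * mom 2 b) \<and> p_dvd (mom 2 a - w * mom 2 c) \<and>
     p_dvd (mom 3 a + mom 3 b + mom 3 c) \<and> p_dvd (mom 4 a + mom 4 b + mom 4 c)"

lemma parity_checks_rotate: "parity_checks a b c \<Longrightarrow> parity_checks b c a"
  unfolding parity_checks_def by (simp add: algebra_simps)

lemma pair_support_subset: "pair_support f g \<subseteq> {..<p}"
  by (auto simp: pair_support_def)

lemma finite_pair_support [simp]: "finite (pair_support f g)"
  using finite_subset[OF pair_support_subset] by blast

lemma residue_support_subset_pair_support: "residue_support p f \<subseteq> pair_support f g"
  by (auto simp: residue_support_def pair_support_def)

lemma twist_outside_pair_support:
  "r < p \<Longrightarrow> r \<notin> pair_support a b \<Longrightarrow> p_dvd (twist a b r)"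
  by (simp add: pair_support_def twist_def)

lemma card_support_le_pair_weight_left: "card (residue_support p f) \<le> pair_weight f g"
  by (rule card_mono[OF finite_pair_support residue_support_subset_pair_support])

lemma card_support_le_pair_weight_right: "card (residue_support p g) \<le> pair_weight f g"
proof -
  define pred where "pred s = (s + (p - 1)) mod p" for s
  have succ_pred: "Suc (pred s) mod p = s" if "s < p" for s
    using mod_add_mod_add[of "p - 1" 1 0 1 p s] that p_ge_7 by (simp add: pred_def)
  have "inj_on pred (residue_support p g)"
    by (rule inj_on_inverseI[where g = "\<lambda>r. (r + 1) mod p"])
      (auto simp: succ_pred residue_support_def)
  moreover have "pred s \<in> pair_support f g" if "s \<in> residue_support p g" for s
  proof -
    have "s < p" "\<not> p_dvd (g s)" "pred s < p"
      using that p_ge_7 by (auto simp: residue_support_def pred_def)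
    then show ?thesis using succ_pred by (simp add: pair_support_def)
  qed
  ultimately show ?thesis
    by (intro card_inj_on_le) auto
qed

lemma card_support_twist_le_pair_weight: "card (residue_support p (twist f g)) \<le> pair_weight f g"
  by (rule card_mono) (auto simp: residue_support_def pair_support_def twist_def)

lemma moment_twist: "mom j (twist a b) = w * mom j a - mom j (cyclic_shift p 1 b)"
  by (simp add: moment_def twist_def cyclic_shift_def sum_subtractf sum_distrib_left
      left_diff_distrib mult.assoc)

lemma twist_moments:
  assumes "moments_vanish p 2 a" "moments_vanish p 2 b"
  shows "moments_vanish p 2 (twist a b)"
    and "p_dvd (mom 2 (twist a b) - (w * mom 2 a - mom 2 b))"
    and "p_dvd (mom 3 (twist a b) - (w * mom 3 a - mom 3 b + 3 * mom 2 b))"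
    and "p_dvd (mom 4 (twist a b) - (w * mom 4 a - mom 4 b + 4 * mom 3 b - 6 * mom 2 b))"
proof -
  have shift: "p_dvd (mom j (cyclic_shift p 1 b) -
      (\<Sum>i\<in>{2..j}. of_nat (j choose i) * (-1) ^ (j - i) * mom i b))" for j
    using moment_cyclic_shift_vanishing[OF _ _ assms(2), of 1 "-1" j] p_ge_7 by simp
  have expansions:
    "(\<Sum>i\<in>{2..2}. of_nat (2 choose i) * (-1) ^ (2 - i) * mom i b) = mom 2 b"
    "(\<Sum>i\<in>{2..3}. of_nat (3 choose i) * (-1) ^ (3 - i) * mom i b) = mom 3 b - 3 * mom 2 b"
    "(\<Sum>i\<in>{2..4}. of_nat (4 choose i) * (-1) ^ (4 - i) * mom i b) =
      mom 4 b - 4 * mom 3 b + 6 * mom 2 b"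
    by (simp_all add: eval_nat_numeral binomial_Suc_Suc)
  show "moments_vanish p 2 (twist a b)"
    using assms(1) moments_vanish_cyclic_shift[OF _ _ assms(2), of 1 "-1"] p_ge_7
    by (auto simp: moments_vanish_def moment_twist)
  have "p_dvd (E - mom j (cyclic_shift p 1 b))"
    if "(\<Sum>i\<in>{2..j}. of_nat (j choose i) * (-1) ^ (j - i) * mom i b) = E" for j E
    using shift[of j] unfolding that by (simp only: dvd_diff_commute)
  note shift_expanded = this[OF expansions(1)] this[OF expansions(2)] this[OF expansions(3)]
  have "mom 2 (twist a b) - (w * mom 2 a - mom 2 b) = mom 2 b - mom 2 (cyclic_shift p 1 b)"
    by (simp add: moment_twist)
  with shift_expanded(1) show "p_dvd (mom 2 (twist a b) - (w * mom 2 a - mom 2 b))"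
    by (simp only:)
  have "mom 3 (twist a b) - (w * mom 3 a - mom 3 b + 3 * mom 2 b) =
      (mom 3 b - 3 * mom 2 b) - mom 3 (cyclic_shift p 1 b)"
    by (simp add: moment_twist)
  with shift_expanded(2) show "p_dvd (mom 3 (twist a b) - (w * mom 3 a - mom 3 b + 3 * mom 2 b))"
    by (simp only:)
  have "mom 4 (twist a b) - (w * mom 4 a - mom 4 b + 4 * mom 3 b - 6 * mom 2 b) =
      (mom 4 b - 4 * mom 3 b + 6 * mom 2 b) - mom 4 (cyclic_shift p 1 b)"
    by (simp add: moment_twist)
  with shift_expanded(3)
  show "p_dvd (mom 4 (twist a b) - (w * mom 4 a - mom 4 b + 4 * mom 3 b - 6 * mom 2 b))"
    by (simp only:)
qed

lemma moments_vanish_twist: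
  assumes "moments_vanish p 2 a" "moments_vanish p 2 b" "p_dvd (mom 2 b - w * mom 2 a)"
  shows "moments_vanish p 3 (twist a b)"
proof -
  have "mom 2 (twist a b) = (mom 2 (twist a b) - (w * mom 2 a - mom 2 b)) - (mom 2 b - w * mom 2 a)"
    by simp
  also have "p_dvd \<dots>"
    using twist_moments(2)[OF assms(1,2)] assms(3) by (simp only: dvd_diff)
  finally show ?thesis
    using twist_moments(1)[OF assms(1,2)] moments_vanish_Suc[of p 2] by simp
qed

lemma twist_vanishes_moments:
  assumes "moments_vanish p 2 a" "moments_vanish p 2 b" "twist_vanishes a b"
  shows "p_dvd (w * mom 3 a - mom 3 b + 3 * mom 2 b)"
    and "p_dvd (w * mom 4 a - mom 4 b + 4 * mom 3 b - 6 * mom 2 b)"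
proof -
  have "p_dvd (mom j (twist a b))" for j
    using assms(3) by (intro moment_dvd_of_pointwise) (simp add: twist_vanishes_def)
  then show "p_dvd (w * mom 3 a - mom 3 b + 3 * mom 2 b)"
    and "p_dvd (w * mom 4 a - mom 4 b + 4 * mom 3 b - 6 * mom 2 b)"
    using twist_moments(3,4)[OF assms(1,2)] by (simp_all add: dvd_diff_right_iff)
qed

lemma twists_vanish_imp_M2_dvd:
  assumes checks: "parity_checks a b c" and "twist_vanishes a b" "twist_vanishes b c"
  shows "p_dvd (mom 2 c)"
proof -
  have a: "moments_vanish p 2 a" and b: "moments_vanish p 2 b" and c: "moments_vanish p 2 c"
    and M2: "p_dvd (mom 2 c - w * mom 2 b)" and M3: "p_dvd (mom 3 a + mom 3 b + mom 3 c)"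
    using checks by (auto simp: parity_checks_def)
  note ab = twist_vanishes_moments(1)[OF a b assms(2)]
  note bc = twist_vanishes_moments(1)[OF b c assms(3)]
  have "3 * ((w + 2) * mom 2 c) = mom 3 c * (w\<^sup>2 + w + 1) - w\<^sup>2 * (mom 3 a + mom 3 b + mom 3 c)
      + w * (w * mom 3 a - mom 3 b + 3 * mom 2 b) + (1 + w) * (w * mom 3 b - mom 3 c + 3 * mom 2 c)
      + 3 * (mom 2 c - w * mom 2 b)"
    by (simp add: algebra_simps power2_eq_square)
  also have "p_dvd \<dots>"
    using root M3 ab bc M2 by (simp only: dvd_add dvd_diff dvd_mult)
  finally show ?thesis
    using root_not_dvd(4) not_p_dvd_small[of 3] by (simp add: p_dvd_mult_iff)
qed

lemma parity_checks_M2_dvd_next: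
  assumes "parity_checks a b c" "p_dvd (mom 2 a)"
  shows "p_dvd (mom 2 b)"
proof -
  have "mom 2 b = (mom 2 b - w * mom 2 a) + w * mom 2 a" by simp
  also have "p_dvd \<dots>" using assms by (simp only: parity_checks_def dvd_add dvd_mult)
  finally show ?thesis .
qed

lemma moments_shift_minus_2:
  assumes "moments_vanish p 3 z"
  shows "moments_vanish p 3 (cyclic_shift p (p - 2) z)"
    and "p_dvd (mom 3 (cyclic_shift p (p - 2) z) - mom 3 z)"
    and "p_dvd (mom 4 (cyclic_shift p (p - 2) z) - (mom 4 z + 8 * mom 3 z))"
proof -
  have k: "p - 2 \<le> p" "p_dvd (2 + int (p - 2))" using p_ge_7 by simp_all
  show "moments_vanish p 3 (cyclic_shift p (p - 2) z)"
    by (rule moments_vanish_cyclic_shift[OF k assms])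
  have "(\<Sum>i\<in>{3..3}. of_nat (3 choose i) * 2 ^ (3 - i) * mom i z) = mom 3 z"
    "(\<Sum>i\<in>{3..4}. of_nat (4 choose i) * 2 ^ (4 - i) * mom i z) = mom 4 z + 8 * mom 3 z"
    by (simp_all add: eval_nat_numeral binomial_Suc_Suc)
  then show "p_dvd (mom 3 (cyclic_shift p (p - 2) z) - mom 3 z)"
    and "p_dvd (mom 4 (cyclic_shift p (p - 2) z) - (mom 4 z + 8 * mom 3 z))"
    using moment_cyclic_shift_vanishing[OF k assms, of 3] moment_cyclic_shift_vanishing[OF k assms, of 4]
    by simp_all
qed

lemma twist_moment_relations:
  assumes checks: "parity_checks a b c" and ab: "twist_vanishes a b"
  shows "p_dvd (mom 3 (twist b c) - 3 * mom 2 b * (w - w\<^sup>2))"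
    and "p_dvd (mom 3 (twist c a) + mom 3 (twist b c))"
    and "p_dvd (mom 4 (twist b c) + mom 4 (twist c a))"
proof -
  have a: "moments_vanish p 2 a" and b: "moments_vanish p 2 b" and c: "moments_vanish p 2 c"
    and E4: "p_dvd (mom 2 b - w * mom 2 a)" and E5: "p_dvd (mom 2 c - w * mom 2 b)"
    and M3: "p_dvd (mom 3 a + mom 3 b + mom 3 c)" and M4: "p_dvd (mom 4 a + mom 4 b + mom 4 c)"
    using checks by (auto simp: parity_checks_def)
  note E1 = twist_vanishes_moments(1)[OF a b ab] and F1 = twist_vanishes_moments(2)[OF a b ab]
  note T3bc = twist_moments(3)[OF b c] and T3ca = twist_moments(3)[OF c a]
  note T4bc = twist_moments(4)[OF b c] and T4ca = twist_moments(4)[OF c a]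
  have "mom 3 (twist b c) - 3 * mom 2 b * (w - w\<^sup>2) =
      (mom 3 (twist b c) - (w * mom 3 b - mom 3 c + 3 * mom 2 c)) + (mom 3 b - (w - 1) * mom 3 a) * (w\<^sup>2 + w + 1)
      + 3 * (mom 2 c - w * mom 2 b) + w\<^sup>2 * (w * mom 3 a - mom 3 b + 3 * mom 2 b) - (mom 3 a + mom 3 b + mom 3 c)"
    by (simp add: algebra_simps power2_eq_square)
  also have "p_dvd \<dots>" using T3bc root E5 E1 M3 by (simp only: dvd_add dvd_diff dvd_mult)
  finally show "p_dvd (mom 3 (twist b c) - 3 * mom 2 b * (w - w\<^sup>2))" .
  have "mom 3 (twist c a) + mom 3 (twist b c) =
      (mom 3 (twist c a) - (w * mom 3 c - mom 3 a + 3 * mom 2 a))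
      + (mom 3 (twist b c) - (w * mom 3 b - mom 3 c + 3 * mom 2 c))
      - (w * mom 3 a - mom 3 b + 3 * mom 2 b) + (w - 1) * (mom 3 a + mom 3 b + mom 3 c)
      + 3 * mom 2 a * (w\<^sup>2 + w + 1) + 3 * (1 + w) * (mom 2 b - w * mom 2 a) + 3 * (mom 2 c - w * mom 2 b)"
    by (simp add: algebra_simps power2_eq_square)
  also have "p_dvd \<dots>" using T3ca T3bc E1 M3 root E4 E5 by (simp only: dvd_add dvd_diff dvd_mult)
  finally show "p_dvd (mom 3 (twist c a) + mom 3 (twist b c))" .
  have "mom 4 (twist b c) + mom 4 (twist c a) =
      (mom 4 (twist b c) - (w * mom 4 b - mom 4 c + 4 * mom 3 c - 6 * mom 2 c))
      + (mom 4 (twist c a) - (w * mom 4 c - mom 4 a + 4 * mom 3 a - 6 * mom 2 a))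
      - (w * mom 4 a - mom 4 b + 4 * mom 3 b - 6 * mom 2 b) + (w - 1) * (mom 4 a + mom 4 b + mom 4 c)
      + 4 * (mom 3 a + mom 3 b + mom 3 c) - 6 * mom 2 a * (w\<^sup>2 + w + 1)
      - 6 * (1 + w) * (mom 2 b - w * mom 2 a) - 6 * (mom 2 c - w * mom 2 b)"
    by (simp add: algebra_simps power2_eq_square)
  also have "p_dvd \<dots>" using T4bc T4ca F1 M4 M3 root E4 E5 by (simp only: dvd_add dvd_diff dvd_mult)
  finally show "p_dvd (mom 4 (twist b c) + mom 4 (twist c a))" .
qed

lemma twist_step_relation:
  assumes ab: "twist_vanishes a b" and r: "r < p"
  shows "p_dvd (w\<^sup>2 * twist b c r + w * twist c a ((r + 1) mod p) - (b r - b ((r + 3) mod p)))"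
proof -
  have idx: "((r + 1) mod p + 1) mod p = (r + 2) mod p" "((r + 2) mod p + 1) mod p = (r + 3) mod p"
    by (simp_all add: mod_Suc_eq numeral_3_eq_3 numeral_2_eq_2)
  have "p_dvd (twist a b ((r + 2) mod p))" using ab p_ge_7 by (simp add: twist_vanishes_def)
  then have R: "p_dvd (w * a ((r + 2) mod p) - b ((r + 3) mod p))" unfolding twist_def idx(2) .
  have "w\<^sup>2 * twist b c r + w * twist c a ((r + 1) mod p) - (b r - b ((r + 3) mod p)) =
      b r * (w ^ 3 - 1) - (w * a ((r + 2) mod p) - b ((r + 3) mod p))"
    unfolding twist_def idx(1) by (simp add: algebra_simps power2_eq_square power3_eq_cube)
  also have "p_dvd \<dots>" using root_cube R by (simp only: dvd_diff dvd_mult)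
  finally show ?thesis .
qed

lemma M3_twist_not_dvd:
  assumes "parity_checks a b c" "twist_vanishes a b" "\<not> p_dvd (mom 2 b)"
  shows "\<not> p_dvd (mom 3 (twist b c))"
proof
  assume "p_dvd (mom 3 (twist b c))"
  moreover have "3 * (mom 2 b * (w * - (w - 1))) =
      mom 3 (twist b c) - (mom 3 (twist b c) - 3 * mom 2 b * (w - w\<^sup>2))"
    by (simp add: algebra_simps power2_eq_square)
  ultimately have "p_dvd (3 * (mom 2 b * (w * - (w - 1))))"
    using twist_moment_relations(1)[OF assms(1,2)] by (simp only: dvd_diff)
  then show False
    using assms(3) root_not_dvd(1,2) not_p_dvd_small[of 3] by (simp add: p_dvd_mult_iff dvd_diff_commute)
qed

subsection \<open>Pair weights \<open>3 + 4 + 4\<close>\<close>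

lemma mod_plus_3_cong: "p_dvd (int ((x + 3) mod p) - int x - 3)"
  using int_mod_add_cong[of p x 3] by (simp add: algebra_simps)

lemma mod_minus_3_cong: "p_dvd (int ((x + (p - 3)) mod p) - int x + 3)"
proof -
  have "int ((x + (p - 3)) mod p) - int x + 3 = (int ((x + (p - 3)) mod p) - (int x + int (p - 3))) + int p"
    using p_ge_7 by simp
  also have "p_dvd \<dots>" using int_mod_add_cong by (simp only: dvd_add dvd_refl)
  finally show ?thesis .
qed

lemma progression_not_in_three_set:
  assumes U: "finite U" "card U = 3" "{x0, x1, x2, x3} \<subseteq> U" "U \<subseteq> {..<p}"
    and d: "d = 3 \<or> d = -3"
    and steps: "p_dvd (int x1 - int x0 - d)" "p_dvd (int x2 - int x1 - d)" "p_dvd (int x3 - int x2 - d)"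
  shows False
proof -
  have step_multiple: "\<not> p_dvd (k * d)" if "k \<in> {1, 2, 3}" for k :: int
    using that d not_p_dvd_small[of 3] not_p_dvd_small[of 6] not_p_dvd_nine by auto
  have "x0 \<noteq> x1" "x1 \<noteq> x2" "x2 \<noteq> x3"
    using steps step_multiple[of 1] by auto
  moreover have "x0 \<noteq> x2" "x1 \<noteq> x3"
    using step_multiple[of 2] dvd_add[OF steps(1) steps(2)] dvd_add[OF steps(2) steps(3)]
    by (auto simp: algebra_simps)
  moreover have "x0 \<noteq> x3"
    using step_multiple[of 3] dvd_add[OF dvd_add[OF steps(1) steps(2)] steps(3)]
    by (auto simp: algebra_simps)
  ultimately have "card {x0, x1, x2, x3} = 4" by auto
  with card_mono[OF U(1,3)] U(2) show False by simp
qed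

lemma three_set_not_closed_plus_3:
  assumes U: "U \<subseteq> {..<p}" "card U = 3"
  obtains t where "t \<in> U" "(t + 3) mod p \<notin> U"
proof (rule ccontr)
  assume "\<not> thesis"
  with that have closed: "(u + 3) mod p \<in> U" if "u \<in> U" for u using that by blast
  obtain x0 where x0: "x0 \<in> U" using U(2) by fastforce
  define x1 where "x1 = (x0 + 3) mod p"
  define x2 where "x2 = (x1 + 3) mod p"
  define x3 where "x3 = (x2 + 3) mod p"
  have "{x0, x1, x2, x3} \<subseteq> U" using x0 closed by (simp add: x1_def x2_def x3_def)
  moreover have "p_dvd (int x1 - int x0 - 3)" "p_dvd (int x2 - int x1 - 3)" "p_dvd (int x3 - int x2 - 3)"
    unfolding x1_def x2_def x3_def by (rule mod_plus_3_cong)+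
  moreover have "finite U" using U(1) finite_subset by blast
  ultimately show False
    using progression_not_in_three_set[OF _ U(2) _ U(1), where d = 3] by simp
qed

text \<open>Walking down from a right end \<open>t\<close> of \<open>U\<close> in steps of \<open>3\<close> must leave \<open>U\<close> within three steps.\<close>

lemma three_set_gap_ends:
  assumes U: "U \<subseteq> {..<p}" "card U = 3"
  obtains u v where "u \<in> U" "(u + 3) mod p \<notin> U" "v \<in> U" "(v + (p - 3)) mod p \<notin> U"
    and "p_dvd (int u - int v) \<or> p_dvd (int u - int v - 3) \<or> p_dvd (int u - int v - 6)"
proof -
  have fin: "finite U" using U(1) finite_subset by blast
  obtain t where t: "t \<in> U" "(t + 3) mod p \<notin> U" using three_set_not_closed_plus_3[OF U] .
  define pred3 where "pred3 u = (u + (p - 3)) mod p" for u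
  have pred3_cong: "p_dvd (int u - int (pred3 u) - 3)" for u
    using mod_minus_3_cong[of u] by (simp add: pred3_def dvd_diff_commute algebra_simps)
  consider "pred3 t \<notin> U" | "pred3 t \<in> U" "pred3 (pred3 t) \<notin> U"
    | "pred3 t \<in> U" "pred3 (pred3 t) \<in> U" "pred3 (pred3 (pred3 t)) \<notin> U"
    | "pred3 t \<in> U" "pred3 (pred3 t) \<in> U" "pred3 (pred3 (pred3 t)) \<in> U"
    by blast
  then show thesis
  proof cases
    case 1
    then show ?thesis using that[OF t t(1)] by (simp add: pred3_def)
  next
    case 2
    show ?thesis using that[OF t 2(1)] 2(2) pred3_cong[of t] by (simp add: pred3_def)
  next
    case 3
    have "int t - int (pred3 (pred3 t)) - 6 =
        (int t - int (pred3 t) - 3) + (int (pred3 t) - int (pred3 (pred3 t)) - 3)" by simp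
    also have "p_dvd \<dots>" using pred3_cong by (simp only: dvd_add)
    finally show ?thesis using that[OF t 3(2)] 3(3) by (simp add: pred3_def)
  next
    case 4
    have "p_dvd (int (pred3 u) - int u - - 3)" for u
      using mod_minus_3_cong[of u] by (simp add: pred3_def)
    then have False
      using progression_not_in_three_set[OF fin U(2) _ U(1), of t "pred3 t" "pred3 (pred3 t)"
          "pred3 (pred3 (pred3 t))" "-3"] t(1) 4 by blast
    then show ?thesis ..
  qed
qed

lemma not_p_dvd_3w_plus:
  assumes "k \<in> {-3, 0, 3, 6}"
  shows "\<not> p_dvd (3 * w + k)"
proof -
  have eq: "3 * w + k = 3 * (w + k div 3)" using assms by auto
  have "\<not> p_dvd (w + k div 3)" using assms root_not_dvd by auto
  then show ?thesis unfolding eq p_dvd_mult_iff using not_p_dvd_small[of 3] by simp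
qed

lemma gap_ends_separated:
  assumes u: "p_dvd (int u - t - 3 + 3 * w) \<or> p_dvd (int u - t - 5)"
    and v: "p_dvd (int v - t - 3) \<or> p_dvd (int v - t - 2 + 3 * w)"
    and k: "k \<in> {0, 3, 6}"
  shows "\<not> p_dvd (int u - int v - k)"
proof
  assume uv: "p_dvd (int u - int v - k)"
  from u v show False
  proof (elim disjE)
    assume "p_dvd (int u - t - 3 + 3 * w)" "p_dvd (int v - t - 3)"
    moreover have "3 * w + k = (int u - t - 3 + 3 * w) - (int v - t - 3) - (int u - int v - k)"
      by simp
    ultimately have "p_dvd (3 * w + k)" using uv by (simp only: dvd_diff)
    then show False using not_p_dvd_3w_plus[of k] k by simp
  next
    assume "p_dvd (int u - t - 3 + 3 * w)" "p_dvd (int v - t - 2 + 3 * w)"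
    moreover have "k - 1 = (int u - t - 3 + 3 * w) - (int v - t - 2 + 3 * w) - (int u - int v - k)"
      by simp
    ultimately have "p_dvd (k - 1)" using uv by (simp only: dvd_diff)
    then show False using not_p_dvd_small[of "k - 1"] k by auto
  next
    assume "p_dvd (int u - t - 5)" "p_dvd (int v - t - 3)"
    moreover have "k - 2 = (int u - t - 5) - (int v - t - 3) - (int u - int v - k)"
      by simp
    ultimately have "p_dvd (k - 2)" using uv by (simp only: dvd_diff)
    then show False using not_p_dvd_small[of "k - 2"] k by auto
  next
    assume "p_dvd (int u - t - 5)" "p_dvd (int v - t - 2 + 3 * w)"
    moreover have "3 * w + (3 - k) = (int v - t - 2 + 3 * w) - (int u - t - 5) + (int u - int v - k)"
      by simp
    ultimately have "p_dvd (3 * w + (3 - k))" using uv by (simp only: dvd_diff dvd_add)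
    then show False using not_p_dvd_3w_plus[of "3 - k"] k by auto
  qed
qed
text \<open>The supports in a hypothetical difference of codewords with pair weights \<open>3 + 4 + 4\<close>, the twist
  of \<open>(a, b)\<close> vanishing; the lemmas of this context lead to a contradiction.\<close>

context
  fixes a b c :: "nat \<Rightarrow> int" and U :: "nat set" and t1 t2 :: nat
  assumes checks: "parity_checks a b c" and ab: "twist_vanishes a b" and M2b: "\<not> p_dvd (mom 2 b)"
    and U: "U = residue_support p b" "card U = 3"
    and t1: "t1 \<notin> U" and bc_support: "\<And>r. r < p \<Longrightarrow> r \<notin> insert t1 U \<Longrightarrow> p_dvd (twist b c r)"
    and t2: "t2 \<notin> U"
    and ca_support: "\<And>r. r < p \<Longrightarrow> r \<notin> insert t2 U \<Longrightarrow> p_dvd (cyclic_shift p (p - 2) (twist c a) r)"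
begin

lemma weight_11_moments_vanish:
  shows "moments_vanish p 2 b"
    and "moments_vanish p 3 (twist b c)"
    and "moments_vanish p 3 (cyclic_shift p (p - 2) (twist c a))"
    and "moments_vanish p 3 (twist c a)"
proof -
  have a: "moments_vanish p 2 a" and b: "moments_vanish p 2 b" and c: "moments_vanish p 2 c"
    and cb: "p_dvd (mom 2 c - w * mom 2 b)" and ac: "p_dvd (mom 2 a - w * mom 2 c)"
    using checks by (auto simp: parity_checks_def)
  show "moments_vanish p 2 b" by (rule b)
  show "moments_vanish p 3 (twist b c)" by (rule moments_vanish_twist[OF b c cb])
  show ca: "moments_vanish p 3 (twist c a)" by (rule moments_vanish_twist[OF c a ac])
  show "moments_vanish p 3 (cyclic_shift p (p - 2) (twist c a))"
    by (rule moments_shift_minus_2(1)[OF ca])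
qed

lemma weight_11_card_insert: "finite U" "card (insert t1 U) = Suc 3" "card (insert t2 U) = Suc 3"
  using U t1 t2 by simp_all

text \<open>Both twists live on four-point supports containing \<open>U\<close>, so their fourth moments are determined
  by their third ones; the relations between the moments of the twists then fix the offset of
  the two extra points.\<close>

lemma weight_11_offset: "p_dvd (int t1 - int t2 + 8)"
proof -
  define z1 z2 where "z1 = twist b c" and "z2 = twist c a"
  define y where "y = cyclic_shift p (p - 2) z2"
  define \<sigma> where "\<sigma> = (\<Sum>c\<in>U. int c)"
  have sums: "(\<Sum>c\<in>insert t1 U. int c) = int t1 + \<sigma>" "(\<Sum>c\<in>insert t2 U. int c) = int t2 + \<sigma>"
    using weight_11_card_insert(1) t1 t2 by (simp_all add: \<sigma>_def)
  have A: "p_dvd (mom 4 z1 - (int t1 + \<sigma>) * mom 3 z1)"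
    using moment_Suc_support_sum[OF weight_11_moments_vanish(2) _ weight_11_card_insert(2) bc_support]
      weight_11_card_insert(1) sums(1) by (simp add: z1_def)
  have B: "p_dvd (mom 4 y - (int t2 + \<sigma>) * mom 3 y)"
    using moment_Suc_support_sum[OF weight_11_moments_vanish(3) _ weight_11_card_insert(3) ca_support]
      weight_11_card_insert(1) sums(2) by (simp add: y_def z2_def)
  note z2 = weight_11_moments_vanish(4)[folded z2_def]
  note Y3 = moments_shift_minus_2(2)[OF z2, folded y_def]
    and Y4 = moments_shift_minus_2(3)[OF z2, folded y_def]
  note G2 = twist_moment_relations(2)[OF checks ab, folded z1_def z2_def]
    and G3 = twist_moment_relations(3)[OF checks ab, folded z1_def z2_def]
  have "mom 3 z1 * (int t1 - int t2 + 8) =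
      - (mom 4 z1 - (int t1 + \<sigma>) * mom 3 z1) - (mom 4 y - (int t2 + \<sigma>) * mom 3 y)
      + (mom 4 y - (mom 4 z2 + 8 * mom 3 z2)) + (mom 4 z1 + mom 4 z2)
      - (int t2 + \<sigma>) * (mom 3 y - mom 3 z2) + (8 - int t2 - \<sigma>) * (mom 3 z2 + mom 3 z1)"
    by (simp add: algebra_simps)
  also have "p_dvd \<dots>" using A B Y3 Y4 G2 G3 by (simp only: dvd_add dvd_diff dvd_minus_iff dvd_mult)
  finally show ?thesis
    using M3_twist_not_dvd[OF checks ab M2b] by (simp add: z1_def p_dvd_mult_iff)
qed

lemma weight_11_M3_shift:
  "p_dvd (mom 3 (cyclic_shift p (p - 2) (twist c a)) + mom 3 (twist b c))"
proof -
  have "mom 3 (cyclic_shift p (p - 2) (twist c a)) + mom 3 (twist b c) =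
      (mom 3 (cyclic_shift p (p - 2) (twist c a)) - mom 3 (twist c a)) + (mom 3 (twist c a) + mom 3 (twist b c))"
    by simp
  also have "p_dvd \<dots>"
    using moments_shift_minus_2(2)[OF weight_11_moments_vanish(4)] twist_moment_relations(2)[OF checks ab]
    by (simp only: dvd_add)
  finally show ?thesis .
qed

lemma weight_11_lagrange:
  assumes u: "u \<in> U"
  defines "Q \<equiv> (\<Prod>c\<in>U - {u}. int u - int c)"
  shows "p_dvd (b u * Q - mom 2 b)"
    and "p_dvd (twist b c u * ((int u - int t1) * Q) - mom 3 (twist b c))"
    and "p_dvd (cyclic_shift p (p - 2) (twist c a) u * ((int u - int t2) * Q)
      - mom 3 (cyclic_shift p (p - 2) (twist c a)))"
proof -
  have fin: "finite U" and up: "u < p"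
    using u U residue_support_subset[of p b] by auto
  have prod: "(\<Prod>c\<in>insert t U - {u}. int u - int c) = (int u - int t) * Q" if "t \<notin> U" for t
  proof -
    have "insert t U - {u} = insert t (U - {u})" "t \<notin> U - {u}" using that u by auto
    then show ?thesis using fin by (simp add: Q_def)
  qed
  show "p_dvd (b u * Q - mom 2 b)"
    using lagrange_moment[OF weight_11_moments_vanish(1) fin _ u up] U
    by (auto simp: Q_def residue_support_def)
  have "p_dvd (twist b c u * (\<Prod>c\<in>insert t1 U - {u}. int u - int c) - mom 3 (twist b c))"
    by (rule lagrange_moment[OF weight_11_moments_vanish(2) _ weight_11_card_insert(2) _ up bc_support])
      (use fin u in auto)
  then show "p_dvd (twist b c u * ((int u - int t1) * Q) - mom 3 (twist b c))"
    using prod[OF t1] by simp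
  have "p_dvd (cyclic_shift p (p - 2) (twist c a) u * (\<Prod>c\<in>insert t2 U - {u}. int u - int c)
      - mom 3 (cyclic_shift p (p - 2) (twist c a)))"
    by (rule lagrange_moment[OF weight_11_moments_vanish(3) _ weight_11_card_insert(3) _ up ca_support])
      (use fin u in auto)
  then show "p_dvd (cyclic_shift p (p - 2) (twist c a) u * ((int u - int t2) * Q)
      - mom 3 (cyclic_shift p (p - 2) (twist c a)))"
    using prod[OF t2] by simp
qed

lemma weight_11_forward_gap:
  assumes u: "u \<in> U" and gap: "(u + 3) mod p \<notin> U"
  shows "p_dvd (int u - int t1 - 3 + 3 * w) \<or> p_dvd (int u - int t1 - 5)"
proof (cases "(u + 3) mod p = t2")
  case True
  have "int u - int t1 - 5 = - (int ((u + 3) mod p) - int u - 3) - (int t1 - int t2 + 8)"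
    using True by simp
  also have "p_dvd \<dots>" using mod_plus_3_cong weight_11_offset by (simp only: dvd_diff dvd_minus_iff)
  finally show ?thesis ..
next
  case False
  define z1 z2 Q where "z1 = twist b c" and "z2 = twist c a"
    and "Q = (\<Prod>c\<in>U - {u}. int u - int c)"
  have up: "u < p" using u U residue_support_subset[of p b] by auto
  have "p_dvd (cyclic_shift p (p - 2) z2 ((u + 3) mod p))"
    using ca_support[of "(u + 3) mod p"] False gap p_ge_7 by (simp add: z2_def)
  moreover have "((u + 3) mod p + (p - 2)) mod p = (u + 1) mod p"
    using mod_add_mod_add[of 3 "p - 2" 1 1 p u] p_ge_7 by simp
  ultimately have z2_next: "p_dvd (z2 ((u + 1) mod p))" by (simp add: cyclic_shift_def)
  have b_gap: "p_dvd (b ((u + 3) mod p))"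
    using gap U p_ge_7 by (simp add: residue_support_def)
  have "w\<^sup>2 * z1 u - b u = (w\<^sup>2 * z1 u + w * z2 ((u + 1) mod p) - (b u - b ((u + 3) mod p)))
      - w * z2 ((u + 1) mod p) - b ((u + 3) mod p)"
    by simp
  also have "p_dvd \<dots>"
    using twist_step_relation[OF ab up, of c] z2_next b_gap
    by (simp only: z1_def z2_def dvd_diff dvd_mult)
  finally have step: "p_dvd (w\<^sup>2 * z1 u - b u)" .
  note lagrange = weight_11_lagrange(1,2)[OF u, folded z1_def Q_def]
  note G1 = twist_moment_relations(1)[OF checks ab, folded z1_def]
  have "mom 2 b * (int u - int t1 - 3 + 3 * w) =
      - (int u - int t1) * (b u * Q - mom 2 b) + w\<^sup>2 * (z1 u * ((int u - int t1) * Q) - mom 3 z1)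
      - (int u - int t1) * Q * (w\<^sup>2 * z1 u - b u) + w\<^sup>2 * (mom 3 z1 - 3 * mom 2 b * (w - w\<^sup>2))
      + 3 * mom 2 b * (1 - w) * (w - 1) * (w\<^sup>2 + w + 1)"
    by (simp add: algebra_simps power2_eq_square power3_eq_cube)
  also have "p_dvd \<dots>" using lagrange step G1 root by (simp only: dvd_add dvd_diff dvd_mult)
  finally show ?thesis using M2b by (simp add: p_dvd_mult_iff)
qed

lemma weight_11_backward_gap:
  assumes u: "u \<in> U" and gap: "(u + (p - 3)) mod p \<notin> U"
  shows "p_dvd (int u - int t1 - 3) \<or> p_dvd (int u - int t1 - 2 + 3 * w)"
proof (cases "(u + (p - 3)) mod p = t1")
  case True
  have "int u - int t1 - 3 = - (int ((u + (p - 3)) mod p) - int u + 3)"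
    using True by simp
  also have "p_dvd \<dots>" using mod_minus_3_cong by (simp only: dvd_minus_iff)
  finally show ?thesis ..
next
  case False
  define r z1 z2 y Q where "r = (u + (p - 3)) mod p" and "z1 = twist b c" and "z2 = twist c a"
    and "y = cyclic_shift p (p - 2) z2" and "Q = (\<Prod>c\<in>U - {u}. int u - int c)"
  have up: "u < p" using u U residue_support_subset[of p b] by auto
  have rp: "r < p" using p_ge_7 by (simp add: r_def)
  have z1_gap: "p_dvd (z1 r)" using bc_support[OF rp] False gap by (simp add: r_def z1_def)
  have b_gap: "p_dvd (b r)" using gap U rp by (simp add: r_def residue_support_def)
  have "(r + 1) mod p = (u + (p - 2)) mod p"
    using mod_add_mod_add[of "p - 3" 1 "p - 2" 0 p u] p_ge_7 by (simp add: r_def)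
  moreover have "(r + 3) mod p = u"
    using mod_add_mod_add[of "p - 3" 3 0 1 p u] p_ge_7 up by (simp add: r_def)
  ultimately have "p_dvd (w\<^sup>2 * z1 r + w * y u - (b r - b u))"
    using twist_step_relation[OF ab rp, of c] by (simp add: z1_def z2_def y_def cyclic_shift_def)
  moreover have "w * y u + b u = (w\<^sup>2 * z1 r + w * y u - (b r - b u)) - w\<^sup>2 * z1 r + b r"
    by simp
  ultimately have step: "p_dvd (w * y u + b u)" using z1_gap b_gap by (simp only: dvd_add dvd_diff dvd_mult)
  note lagrange = weight_11_lagrange(1,3)[OF u, folded z2_def Q_def, folded y_def]
  note M3y = weight_11_M3_shift[folded z2_def, folded y_def z1_def]
  note G1 = twist_moment_relations(1)[OF checks ab, folded z1_def]
  have "mom 2 b * (int u - int t1 - 2 + 3 * w) =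
      - (int u - int t2) * (b u * Q - mom 2 b) + (int u - int t2) * Q * (w * y u + b u)
      - w * (y u * ((int u - int t2) * Q) - mom 3 y) - w * (mom 3 y + mom 3 z1)
      + w * (mom 3 z1 - 3 * mom 2 b * (w - w\<^sup>2)) - mom 2 b * (int t1 - int t2 + 8)
      + 3 * mom 2 b * (2 - w) * (w\<^sup>2 + w + 1)"
    by (simp add: algebra_simps power2_eq_square power3_eq_cube)
  also have "p_dvd \<dots>"
    using lagrange step M3y G1 weight_11_offset root by (simp only: dvd_add dvd_diff dvd_mult)
  finally show ?thesis using M2b by (simp add: p_dvd_mult_iff)
qed

lemma weight_11_configuration_impossible: False
proof -
  have "U \<subseteq> {..<p}" using U residue_support_subset by blast
  then obtain u v where u: "u \<in> U" "(u + 3) mod p \<notin> U" and v: "v \<in> U" "(v + (p - 3)) mod p \<notin> U"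
    and close: "p_dvd (int u - int v - 0) \<or> p_dvd (int u - int v - 3) \<or> p_dvd (int u - int v - 6)"
    using three_set_gap_ends U(2) by (metis diff_zero)
  show False
    using close gap_ends_separated[OF weight_11_forward_gap[OF u] weight_11_backward_gap[OF v]] by blast
qed

end

lemma shift_2_cancel: "s < p \<Longrightarrow> ((s + 2) mod p + (p - 2)) mod p = s"
  and shift_minus_2_cancel: "r < p \<Longrightarrow> ((r + (p - 2)) mod p + 2) mod p = r"
  using mod_add_mod_add[of 2 "p - 2" 0 1 p s] mod_add_mod_add[of "p - 2" 2 0 1 p r] p_ge_7 by simp_all

lemma card_shifted_pair_support: "card ((\<lambda>s. (s + 2) mod p) ` pair_support c a) = pair_weight c a"
proof (rule card_image, rule inj_on_inverseI)
  fix s assume "s \<in> pair_support c a"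
  then have "s < p" using pair_support_subset by auto
  then show "((s + 2) mod p + (p - 2)) mod p = s" by (rule shift_2_cancel)
qed

lemma shifted_twist_outside:
  assumes "r < p" "r \<notin> (\<lambda>s. (s + 2) mod p) ` pair_support c a"
  shows "p_dvd (cyclic_shift p (p - 2) (twist c a) r)"
proof -
  define s where "s = (r + (p - 2)) mod p"
  have sp: "s < p" using p_ge_7 by (simp add: s_def)
  have r: "r = (s + 2) mod p" using shift_minus_2_cancel[OF assms(1)] by (simp add: s_def)
  have "s \<notin> pair_support c a"
  proof
    assume "s \<in> pair_support c a"
    then have "(s + 2) mod p \<in> (\<lambda>s. (s + 2) mod p) ` pair_support c a" by (rule imageI)
    with r assms(2) show False by simp
  qed
  then show ?thesis
    using twist_outside_pair_support[OF sp] by (simp add: cyclic_shift_def s_def)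
qed

lemma support_subset_shifted_pair_support:
  assumes "twist_vanishes a b"
  shows "residue_support p b \<subseteq> (\<lambda>s. (s + 2) mod p) ` pair_support c a"
proof
  fix u assume u: "u \<in> residue_support p b"
  then have up: "u < p" and bu: "\<not> p_dvd (b u)" by (auto simp: residue_support_def)
  define s where "s = (u + (p - 2)) mod p"
  have sp: "s < p" using p_ge_7 by (simp add: s_def)
  have s_next: "(s + 1) mod p < p" "((s + 1) mod p + 1) mod p = u"
    using mod_add_mod_add[of "p - 2" 1 "p - 1" 0 p u] mod_add_mod_add[of "p - 1" 1 0 1 p u] up p_ge_7
    by (simp_all add: s_def mod_add_left_eq)
  have "p_dvd (twist a b ((s + 1) mod p))"
    using assms s_next(1) unfolding twist_vanishes_def by blast
  then have twist: "p_dvd (w * a ((s + 1) mod p) - b u)"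
    unfolding twist_def s_next(2) .
  have "\<not> p_dvd (a ((s + 1) mod p))"
  proof
    assume "p_dvd (a ((s + 1) mod p))"
    then have "p_dvd (w * a ((s + 1) mod p) - (w * a ((s + 1) mod p) - b u))"
      using twist by (simp only: dvd_diff dvd_mult)
    with bu show False by simp
  qed
  then have "s \<in> pair_support c a" using sp by (simp add: pair_support_def)
  moreover have "u = (s + 2) mod p" using shift_minus_2_cancel[OF up] by (simp add: s_def)
  ultimately show "u \<in> (\<lambda>s. (s + 2) mod p) ` pair_support c a" by blast
qed

lemma pair_weights_3_4_4_impossible:
  assumes checks: "parity_checks a b c" and ab: "twist_vanishes a b" and M2b: "\<not> p_dvd (mom 2 b)"
    and weights: "card (residue_support p b) = 3" "pair_weight b c = 4" "pair_weight c a = 4"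
  shows False
proof -
  have "pair_weight b c = Suc (card (residue_support p b))" using weights by simp
  then obtain t1 where t1: "t1 \<notin> residue_support p b" "pair_support b c = insert t1 (residue_support p b)"
    by (rule obtain_insert_of_card_Suc[OF finite_pair_support residue_support_subset_pair_support])
  have "card ((\<lambda>s. (s + 2) mod p) ` pair_support c a) = Suc (card (residue_support p b))"
    using weights card_shifted_pair_support by simp
  then obtain t2 where t2: "t2 \<notin> residue_support p b"
    "(\<lambda>s. (s + 2) mod p) ` pair_support c a = insert t2 (residue_support p b)"
    by (rule obtain_insert_of_card_Suc[OF finite_imageI[OF finite_pair_support]
          support_subset_shifted_pair_support[OF ab]])
  show False
    by (rule weight_11_configuration_impossible[OF checks ab M2b refl weights(1) t1(1) _ t2(1)])
      (use t1(2) t2(2) twist_outside_pair_support shifted_twist_outside in auto)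
qed

lemma pair_weight_gt_3_if_twist_nonzero:
  assumes "parity_checks a b c" "\<not> twist_vanishes a b"
  shows "3 < pair_weight a b"
proof -
  have "moments_vanish p 3 (twist a b)"
    using assms(1) by (intro moments_vanish_twist) (auto simp: parity_checks_def)
  moreover have "residue_support p (twist a b) \<noteq> {}"
    using assms(2) by (auto simp: twist_vanishes_def residue_support_def)
  ultimately show ?thesis
    using card_residue_support_gt[OF prime] card_support_twist_le_pair_weight[of a b]
    by (meson less_le_trans)
qed

lemma total_weight_ge_if_M2_dvd:
  assumes checks: "parity_checks a b c" and M2: "p_dvd (mom 2 a)" and nonzero: "residue_support p a \<noteq> {}"
  shows "12 \<le> pair_weight a b + pair_weight b c + pair_weight c a"
proof -
  have a: "moments_vanish p 2 a" and b: "moments_vanish p 2 b" and c: "moments_vanish p 2 c"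
    and M3: "p_dvd (mom 3 a + mom 3 b + mom 3 c)" and M4: "p_dvd (mom 4 a + mom 4 b + mom 4 c)"
    using checks by (auto simp: parity_checks_def)
  have M2b: "p_dvd (mom 2 b)"
    using parity_checks_M2_dvd_next[OF checks M2] .
  have M2c: "p_dvd (mom 2 c)"
    using parity_checks_M2_dvd_next[OF parity_checks_rotate[OF checks] M2b] .
  have a3: "moments_vanish p 3 a" and b3: "moments_vanish p 3 b" and c3: "moments_vanish p 3 c"
    using a b c M2 M2b M2c moments_vanish_Suc[of p 2] by simp_all
  have supp_a: "3 < card (residue_support p a)"
    by (rule card_residue_support_gt[OF prime a3 nonzero])
  show ?thesis
  proof (cases "residue_support p b = {} \<and> residue_support p c = {}")
    case False
    then have "3 < pair_weight b c"
      using card_residue_support_gt[OF prime b3] card_residue_support_gt[OF prime c3]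
        card_support_le_pair_weight_left[of b c] card_support_le_pair_weight_right[of c b]
      by fastforce
    then show ?thesis
      using supp_a card_support_le_pair_weight_left[of a b] card_support_le_pair_weight_right[of a c]
      by linarith
  next
    case True
    then have "p_dvd (mom j b)" "p_dvd (mom j c)" for j
      by (auto intro!: moment_dvd_of_pointwise simp: residue_support_def)
    then have "p_dvd (mom 3 a)" "p_dvd (mom 4 a)"
      using M3 M4 by (simp_all add: dvd_add_left_iff add.assoc)
    then have "moments_vanish p 5 a"
      using a3 moments_vanish_Suc[of p 3] moments_vanish_Suc[of p 4] by simp
    then have "5 < card (residue_support p a)"
      by (rule card_residue_support_gt[OF prime _ nonzero])
    then show ?thesis
      using card_support_le_pair_weight_left[of a b] card_support_le_pair_weight_right[of a c]
      by linarith
  qed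
qed

lemma total_weight_ge_if_one_twist_vanishes:
  assumes checks: "parity_checks a b c" and ab: "twist_vanishes a b"
    and bc: "\<not> twist_vanishes b c" and ca: "\<not> twist_vanishes c a" and M2: "\<not> p_dvd (mom 2 b)"
  shows "12 \<le> pair_weight a b + pair_weight b c + pair_weight c a"
proof (rule ccontr)
  assume less: "\<not> ?thesis"
  have "moments_vanish p 2 b" using checks by (simp add: parity_checks_def)
  moreover have "residue_support p b \<noteq> {}"
    using M2 moment_dvd_of_pointwise[of p b 2] by (auto simp: residue_support_def)
  ultimately have "2 < card (residue_support p b)" by (rule card_residue_support_gt[OF prime])
  moreover have "3 < pair_weight b c" "3 < pair_weight c a"
    using pair_weight_gt_3_if_twist_nonzero checks parity_checks_rotate bc ca by blast+
  moreover note card_support_le_pair_weight_right[of b a]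
  ultimately show False
    using less pair_weights_3_4_4_impossible[OF checks ab M2] by linarith
qed

lemma total_weight_ge_12_if_M2_not_dvd:
  assumes checks: "parity_checks a b c"
    and M2: "\<not> p_dvd (mom 2 a)" "\<not> p_dvd (mom 2 b)" "\<not> p_dvd (mom 2 c)"
  shows "12 \<le> pair_weight a b + pair_weight b c + pair_weight c a"
proof -
  have checks': "parity_checks b c a" "parity_checks c a b"
    using checks parity_checks_rotate by blast+
  have not_both: "\<not> (twist_vanishes x y \<and> twist_vanishes y z)"
    if "parity_checks x y z" "\<not> p_dvd (mom 2 z)" for x y z
    using twists_vanish_imp_M2_dvd that by blast
  consider "twist_vanishes a b" | "twist_vanishes b c" | "twist_vanishes c a"
    | "\<not> twist_vanishes a b" "\<not> twist_vanishes b c" "\<not> twist_vanishes c a"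
    by blast
  then show ?thesis
  proof cases
    case 1
    then show ?thesis
      using total_weight_ge_if_one_twist_vanishes[OF checks 1 _ _ M2(2)]
        not_both[OF checks M2(3)] not_both[OF checks'(2) M2(2)] by blast
  next
    case 2
    then show ?thesis
      using total_weight_ge_if_one_twist_vanishes[OF checks'(1) 2 _ _ M2(3)]
        not_both[OF checks'(1) M2(1)] not_both[OF checks M2(3)] by linarith
  next
    case 3
    then show ?thesis
      using total_weight_ge_if_one_twist_vanishes[OF checks'(2) 3 _ _ M2(1)]
        not_both[OF checks'(2) M2(2)] not_both[OF checks'(1) M2(1)] by linarith
  next
    case 4
    then have "3 < pair_weight a b" "3 < pair_weight b c" "3 < pair_weight c a"
      using pair_weight_gt_3_if_twist_nonzero checks checks' by blast+
    then show ?thesis by linarith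
  qed
qed

lemma total_weight_ge_12:
  assumes checks: "parity_checks a b c"
    and nonzero: "residue_support p a \<noteq> {} \<or> residue_support p b \<noteq> {} \<or> residue_support p c \<noteq> {}"
  shows "12 \<le> pair_weight a b + pair_weight b c + pair_weight c a"
proof (cases "p_dvd (mom 2 a)")
  case True
  have checks': "parity_checks b c a" "parity_checks c a b"
    using checks parity_checks_rotate by blast+
  then have "p_dvd (mom 2 b)" "p_dvd (mom 2 c)"
    using True parity_checks_M2_dvd_next checks by blast+
  with True nonzero show ?thesis
    using total_weight_ge_if_M2_dvd[OF checks True] total_weight_ge_if_M2_dvd[OF checks'(1)]
      total_weight_ge_if_M2_dvd[OF checks'(2)]
    by (metis add.commute add.left_commute)
next
  case False
  then have "\<not> p_dvd (mom 2 b)" "\<not> p_dvd (mom 2 c)"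
    using parity_checks_M2_dvd_next checks parity_checks_rotate by blast+
  with False show ?thesis by (rule total_weight_ge_12_if_M2_not_dvd[OF checks])
qed

end

section \<open>The code\<close>

locale pair_code_setting = primitive_cube_root +
  assumes p_mod_3: "p mod 3 = 1"
begin

text \<open>Position \<open>crt_index i r\<close> of \<open>\<int>/3p\<close> is the one congruent to \<open>i\<close> modulo \<open>3\<close> and to \<open>r\<close>
  modulo \<open>p\<close>: as \<open>p \<equiv> 1 (mod 3)\<close>, it is \<open>r + (i + 2r) \<equiv> i (mod 3)\<close>.\<close>

definition crt_index :: "nat \<Rightarrow> nat \<Rightarrow> nat" where
  "crt_index i r = r + p * ((i + 2 * r) mod 3)"

lemma crt_index_less: "r < p \<Longrightarrow> crt_index i r < 3 * p"
proof -
  assume "r < p"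
  moreover have "p * ((i + 2 * r) mod 3) \<le> p * 2" by (intro mult_left_mono) simp_all
  ultimately show ?thesis unfolding crt_index_def by linarith
qed

lemma crt_index_mod_p: "r < p \<Longrightarrow> crt_index i r mod p = r"
  by (simp add: crt_index_def)

lemma crt_index_mod_3: "i < 3 \<Longrightarrow> crt_index i r mod 3 = i"
proof -
  assume "i < 3"
  have "crt_index i r mod 3 = (r + (p mod 3) * ((i + 2 * r) mod 3)) mod 3"
    unfolding crt_index_def by (metis mod_add_right_eq mod_mult_left_eq)
  also have "\<dots> = (i + 3 * r) mod 3" using p_mod_3 by (simp add: mod_add_right_eq add.commute)
  also have "\<dots> = i" using \<open>i < 3\<close> by simp
  finally show ?thesis .
qed

lemma eq_of_mod_3_mod_p:
  assumes "x < 3 * p" "y < 3 * p" "x mod 3 = y mod 3" "x mod p = y mod p"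
  shows "x = y"
proof -
  have "coprime p 3"
    using prime p_ge_7 by (intro prime_imp_coprime) (auto dest: dvd_imp_le)
  then have "[x = y] (mod p * 3)"
    using assms(3,4) by (intro coprime_cong_mult_nat) (simp_all add: cong_def)
  then show ?thesis using assms(1,2) cong_less_imp_eq_nat[of x "p * 3" y] by (simp add: mult.commute)
qed

lemma crt_index_surj:
  assumes n: "n < 3 * p"
  shows "crt_index (n mod 3) (n mod p) = n"
proof -
  have "n mod p < p" "n mod 3 < 3" using p_ge_7 by simp_all
  then show ?thesis
    using eq_of_mod_3_mod_p[OF crt_index_less n crt_index_mod_3 crt_index_mod_p] by blast
qed

lemma crt_index_Suc:
  assumes "i < 3" "r < p"
  shows "(crt_index i r + 1) mod (3 * p) = crt_index ((i + 1) mod 3) ((r + 1) mod p)"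
proof (rule eq_of_mod_3_mod_p)
  have "(crt_index i r + 1) mod (3 * p) mod 3 = (crt_index i r mod 3 + 1) mod 3"
    by (simp add: mod_mod_cancel mod_Suc_eq)
  also have "\<dots> = crt_index ((i + 1) mod 3) ((r + 1) mod p) mod 3"
    using assms by (simp add: crt_index_mod_3)
  finally show "(crt_index i r + 1) mod (3 * p) mod 3 = crt_index ((i + 1) mod 3) ((r + 1) mod p) mod 3" .
  have "(crt_index i r + 1) mod (3 * p) mod p = (crt_index i r mod p + 1) mod p"
    by (simp add: mod_mod_cancel mod_Suc_eq)
  also have "\<dots> = crt_index ((i + 1) mod 3) ((r + 1) mod p) mod p"
    using assms p_ge_7 by (simp add: crt_index_mod_p)
  finally show "(crt_index i r + 1) mod (3 * p) mod p = crt_index ((i + 1) mod 3) ((r + 1) mod p) mod p" .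
qed (use p_ge_7 crt_index_less in simp_all)

definition component :: "nat list \<Rightarrow> nat \<Rightarrow> nat \<Rightarrow> int" where
  "component x i r = int (x ! crt_index i r)"

definition component_diff :: "nat list \<Rightarrow> nat list \<Rightarrow> nat \<Rightarrow> nat \<Rightarrow> int" where
  "component_diff x y i r = component x i r - component y i r"

text \<open>A row of triples \<open>(i, j, k)\<close> stands for the check \<open>\<Sum> k M\<^sub>j(F i) \<equiv> 0 (mod p)\<close>; the ten rows
  are the conditions of \<open>parity_checks\<close> without its third \<open>M\<^sub>2\<close> relation.\<close>

definition check_value :: "(nat \<times> nat \<times> int) list \<Rightarrow> (nat \<Rightarrow> nat \<Rightarrow> int) \<Rightarrow> int" where
  "check_value L F = (\<Sum>(i, j, k)\<leftarrow>L. k * mom j (F i))"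

definition check_rows :: "(nat \<times> nat \<times> int) list list" where
  "check_rows = [[(0, 0, 1)], [(0, 1, 1)], [(1, 0, 1)], [(1, 1, 1)], [(2, 0, 1)], [(2, 1, 1)],
     [(1, 2, 1), (0, 2, -w)], [(2, 2, 1), (1, 2, -w)],
     [(0, 3, 1), (1, 3, 1), (2, 3, 1)], [(0, 4, 1), (1, 4, 1), (2, 4, 1)]]"

definition pair_code :: "nat list set" where
  "pair_code = {x \<in> vecs p (3 * p). \<forall>L\<in>set check_rows. p_dvd (check_value L (component x))}"

lemma pair_code_subset: "pair_code \<subseteq> vecs p (3 * p)"
  by (auto simp: pair_code_def)

lemma check_value_diff:
  "check_value L (component x) - check_value L (component y) = check_value L (component_diff x y)"
  unfolding check_value_def component_diff_def
  by (induction L) (auto simp: moment_diff algebra_simps)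

lemma check_value_cong:
  assumes "\<And>i j. p_dvd (mom j (F i) - mom j (G i))"
  shows "p_dvd (check_value L F - check_value L G)"
proof (induction L)
  case (Cons l L)
  obtain i j k where l: "l = (i, j, k)" by (cases l) auto
  have "check_value (l # L) F - check_value (l # L) G =
      k * (mom j (F i) - mom j (G i)) + (check_value L F - check_value L G)"
    by (simp add: check_value_def l algebra_simps)
  also have "p_dvd \<dots>" using assms Cons.IH by (simp only: dvd_add dvd_mult)
  finally show ?case .
qed (simp add: check_value_def)

lemma additive_check_value: "additive_mod p (3 * p) (\<lambda>x. check_value L (component x))"
  unfolding additive_mod_def
proof (intro ballI)
  fix x y assume x: "x \<in> vecs p (3 * p)" and y: "y \<in> vecs p (3 * p)"
  have "p_dvd (mom j (component (vec_diff p x y) i) - mom j (component_diff x y i))" for i j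
    using vec_diff_nth_cong[OF x y crt_index_less]
    by (intro moment_cong) (simp add: component_def component_diff_def)
  then show "p_dvd (check_value L (component (vec_diff p x y)) -
      (check_value L (component x) - check_value L (component y)))"
    unfolding check_value_diff by (rule check_value_cong)
qed

lemma card_pair_code_ge: "p ^ (3 * p - 10) \<le> card pair_code"
proof -
  define \<Phi> where "\<Phi> = map (\<lambda>L x. check_value L (component x)) check_rows"
  have "pair_code = {x \<in> vecs p (3 * p). \<forall>\<phi>\<in>set \<Phi>. p_dvd (\<phi> x)}"
    by (auto simp: pair_code_def \<Phi>_def)
  moreover have "length \<Phi> = 10" by (simp add: \<Phi>_def check_rows_def)
  ultimately have "p ^ (3 * p - 10) * p ^ 10 \<le> card pair_code * p ^ 10"
    using card_common_zeros_ge[of p \<Phi> "3 * p"] additive_check_value p_ge_7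
    by (simp add: \<Phi>_def power_add[symmetric])
  then show ?thesis using p_ge_7 by simp
qed

lemma parity_checks_component_diff:
  assumes "x \<in> pair_code" "y \<in> pair_code"
  shows "parity_checks (component_diff x y 0) (component_diff x y 1) (component_diff x y 2)"
proof -
  let ?a = "component_diff x y 0" and ?b = "component_diff x y 1" and ?c = "component_diff x y 2"
  have "\<forall>L\<in>set check_rows. p_dvd (check_value L (component_diff x y))"
    using assms dvd_diff unfolding check_value_diff[symmetric] pair_code_def by blast
  then have checks: "moments_vanish p 2 ?a" "moments_vanish p 2 ?b" "moments_vanish p 2 ?c"
    "p_dvd (mom 2 ?b - w * mom 2 ?a)" "p_dvd (mom 2 ?c - w * mom 2 ?b)"
    "p_dvd (mom 3 ?a + mom 3 ?b + mom 3 ?c)" "p_dvd (mom 4 ?a + mom 4 ?b + mom 4 ?c)"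
    unfolding check_rows_def check_value_def moments_vanish_def
    by (simp_all add: less_2_cases_iff algebra_simps)
  have "mom 2 ?a - w * mom 2 ?c =
      - w * (mom 2 ?c - w * mom 2 ?b) - w\<^sup>2 * (mom 2 ?b - w * mom 2 ?a) - mom 2 ?a * (w ^ 3 - 1)"
    by (simp add: algebra_simps power2_eq_square power3_eq_cube)
  also have "p_dvd \<dots>" using checks root_cube by (simp only: dvd_diff dvd_mult)
  finally show ?thesis using checks by (simp add: parity_checks_def)
qed

lemma pair_weights_le_pair_dist:
  assumes x: "x \<in> vecs p (3 * p)" and y: "y \<in> vecs p (3 * p)"
  defines "D \<equiv> component_diff x y"
  shows "pair_weight (D 0) (D 1) + pair_weight (D 1) (D 2) + pair_weight (D 2) (D 0) \<le> pair_dist x y"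
proof -
  define P where "P = {n \<in> {0..<3 * p}. (x ! n, x ! ((n + 1) mod (3 * p))) \<noteq> (y ! n, y ! ((n + 1) mod (3 * p)))}"
  have dist: "pair_dist x y = card P" using x by (simp add: pair_dist_def P_def vecs_def Let_def)
  define S where "S i = pair_support (D i) (D ((i + 1) mod 3))" for i
  have S_in_P: "crt_index i ` S i \<subseteq> P" if "i < 3" for i
  proof clarify
    fix r assume "r \<in> S i"
    then have r: "r < p" and "\<not> p_dvd (D i r) \<or> \<not> p_dvd (D ((i + 1) mod 3) ((r + 1) mod p))"
      by (auto simp: S_def pair_support_def)
    then have "x ! crt_index i r \<noteq> y ! crt_index i r \<or>
        x ! crt_index ((i + 1) mod 3) ((r + 1) mod p) \<noteq> y ! crt_index ((i + 1) mod 3) ((r + 1) mod p)"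
      by (auto simp: D_def component_diff_def component_def)
    then show "crt_index i r \<in> P"
      using crt_index_Suc[OF that r] crt_index_less[OF r] by (auto simp: P_def)
  qed
  have inj: "inj_on (crt_index i) (S i)" if "i < 3" for i
    using that by (intro inj_onI) (metis S_def crt_index_mod_p pair_support_subset lessThan_iff subsetD)
  have disjoint: "crt_index i ` S i \<inter> crt_index j ` S j = {}" if "i < 3" "j < 3" "i \<noteq> j" for i j
  proof (rule equals0I)
    fix n assume "n \<in> crt_index i ` S i \<inter> crt_index j ` S j"
    then obtain r s where "n = crt_index i r" "n = crt_index j s" by blast
    then have "i = j" using crt_index_mod_3[OF that(1), of r] crt_index_mod_3[OF that(2), of s] by simp
    with that(3) show False ..
  qed
  have fin: "finite (S i)" for i by (simp add: S_def)
  have "pair_weight (D 0) (D 1) + pair_weight (D 1) (D 2) + pair_weight (D 2) (D 0) =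
      card (crt_index 0 ` S 0) + card (crt_index 1 ` S 1) + card (crt_index 2 ` S 2)"
  proof -
    have "S 0 = pair_support (D 0) (D 1)" "S 1 = pair_support (D 1) (D 2)"
      "S 2 = pair_support (D 2) (D 0)"
      by (simp_all add: S_def numeral_2_eq_2)
    then show ?thesis
      using card_image[OF inj[of 0]] card_image[OF inj[of 1]] card_image[OF inj[of 2]] by simp
  qed
  also have "\<dots> = card (crt_index 0 ` S 0 \<union> crt_index 1 ` S 1 \<union> crt_index 2 ` S 2)"
    using disjoint[of 0 1] disjoint[of 0 2] disjoint[of 1 2]
    by (simp add: card_Un_disjoint fin Int_Un_distrib2)
  also have "\<dots> \<le> card P" using S_in_P[of 0] S_in_P[of 1] S_in_P[of 2] by (intro card_mono) (auto simp: P_def)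
  finally show ?thesis by (simp add: dist)
qed

lemma component_diff_nonzero:
  assumes x: "x \<in> vecs p (3 * p)" and y: "y \<in> vecs p (3 * p)" and "x \<noteq> y"
  shows "\<exists>i<3. residue_support p (component_diff x y i) \<noteq> {}"
proof -
  have len: "length x = 3 * p" "length y = 3 * p" using x y by (simp_all add: vecs_def)
  then obtain n where n: "n < 3 * p" "x ! n \<noteq> y ! n" using assms(3) nth_equalityI by metis
  have "\<not> p_dvd (component_diff x y (n mod 3) (n mod p))"
  proof
    assume "p_dvd (component_diff x y (n mod 3) (n mod p))"
    then have "p_dvd (int (x ! n) - int (y ! n))"
      by (simp add: component_diff_def component_def crt_index_surj[OF n(1)])
    then show False using dvd_diff_less_imp_eq vecs_nth_less[OF x n(1)] vecs_nth_less[OF y n(1)] n(2) by blast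
  qed
  moreover have "n mod p < p" "n mod 3 < (3::nat)" using p_ge_7 by simp_all
  ultimately show ?thesis unfolding residue_support_def by blast
qed

lemma pair_code_dist_ge:
  assumes "x \<in> pair_code" "y \<in> pair_code" "x \<noteq> y"
  shows "12 \<le> pair_dist x y"
proof -
  have xy: "x \<in> vecs p (3 * p)" "y \<in> vecs p (3 * p)" using assms pair_code_subset by auto
  obtain i where i: "i < 3" "residue_support p (component_diff x y i) \<noteq> {}"
    using component_diff_nonzero[OF xy assms(3)] by blast
  from i(1) have "i = 0 \<or> i = 1 \<or> i = 2" by arith
  then have "residue_support p (component_diff x y 0) \<noteq> {} \<or> residue_support p (component_diff x y 1) \<noteq> {}
      \<or> residue_support p (component_diff x y 2) \<noteq> {}"
    using i(2) by (elim disjE) simp_all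
  then show ?thesis
    using total_weight_ge_12[OF parity_checks_component_diff[OF assms(1,2)]] pair_weights_le_pair_dist[OF xy]
    by linarith
qed

end

lemma cube_root_of_unity_exists:
  assumes "prime p" "p mod 3 = 1"
  shows "\<exists>w::int. int p dvd w\<^sup>2 + w + 1"
proof -
  obtain g where g: "residue_primroot p g"
    using prime_primitive_root_exists[of p] assms(1) prime_gt_1_nat[of p] by auto
  have ord: "ord p g = p - 1" using g assms(1) by (simp add: residue_primroot_def totient_prime)
  define k where "k = (p - 1) div 3"
  have "2 \<le> p" using prime_ge_2_nat[OF assms(1)] .
  then have k: "3 * k = p - 1" "0 < k" "k < p - 1"
    using assms(2) unfolding k_def by presburger+
  define w where "w = int (g ^ k)"
  have "[g ^ (3 * k) = 1] (mod p)" using ord_works[of g p] ord k(1) by simp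
  then have "int p dvd w ^ 3 - 1"
    by (simp add: w_def cong_iff_dvd_diff cong_int_iff[symmetric] power_mult[symmetric] mult.commute
        of_nat_power)
  moreover have "\<not> int p dvd w - 1"
  proof
    assume "int p dvd w - 1"
    then have "[g ^ k = 1] (mod p)" by (simp add: w_def cong_int_iff[symmetric] cong_iff_dvd_diff)
    then show False using ord_minimal[of k p g] k ord by simp
  qed
  moreover have "w ^ 3 - 1 = (w - 1) * (w\<^sup>2 + w + 1)"
    by (simp add: algebra_simps power2_eq_square power3_eq_cube)
  moreover have "prime (int p)" using assms(1) by (simp only: prime_nat_int_transfer)
  ultimately show ?thesis using prime_dvd_mult_iff by metis
qed

theorem theorem2:
  fixes p :: nat
  assumes "prime p" and "odd p" and "3 dvd (p - 1)"
  shows "\<exists>C. C \<subseteq> vecs p (3 * p) \<and> min_pair_dist C = 12 \<and> card C = p ^ (3 * p - 12 + 2)"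
proof -
  have p_mod_3: "p mod 3 = 1" using assms(3) prime_ge_2_nat[OF assms(1)] by presburger
  have "p \<noteq> 2 * 2" using assms(1) prime_product[of 2 2] by auto
  then have p_ge_7: "7 \<le> p" using p_mod_3 assms(2) prime_ge_2_nat[OF assms(1)] by presburger
  obtain w where "int p dvd w\<^sup>2 + w + 1" using cube_root_of_unity_exists[OF assms(1) p_mod_3] by blast
  then interpret pair_code_setting p w
    by unfold_locales (use assms(1) p_ge_7 p_mod_3 in auto)
  have "card pair_code \<le> p ^ (3 * p - 12 + 2)"
    by (rule card_le_pair_singleton[OF pair_code_subset]) (use p_ge_7 pair_code_dist_ge in auto)
  moreover have "p ^ (3 * p - 12 + 2) \<le> card pair_code"
  proof -
    have "3 * p - 12 + 2 = 3 * p - 10" using p_ge_7 by simp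
    then show ?thesis using card_pair_code_ge by (simp only:)
  qed
  ultimately have card: "card pair_code = p ^ (3 * p - 12 + 2)" by (rule antisym)
  have "min_pair_dist pair_code = 12"
    by (rule min_pair_dist_of_mds[OF pair_code_subset _ _ _ card pair_code_dist_ge])
      (use p_ge_7 in simp_all)
  with card show ?thesis using pair_code_subset by blast
qed

end
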